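(* Let $G$ be a group with a conjugation-closed generating set $X$ and let $g\in\mathrm{Mon}(X)$. The order complex $O_g$ of the interval $[1,g]$, with the orthoscheme metric, is isometric to the space $\mathrm{WFact}(G,g,\mathbf I)$ of weighted linear factorizations of $g$.
   Context: $\mathrm{Mon}(X)$ is the generated submonoid; $\ell(x)$ is the minimal length of a product of elements of $X$ equal to $x$; $x\le y$ if there is $x'\in\mathrm{Mon}(X)$ with $xx'=y$ and $\ell(x)+\ell(x')=\ell(y)$; $[1,g]=\{x:x\le g\}$, a bounded graded poset of height $n=\ell(g)$. $O_g$ is the order complex of $[1,g]$ (an ordered $k$-simplex for each chain $x_0<\cdots<x_k$), with the orthoscheme metric: each maximal simplex (maximal chain $x_0<\cdots<x_n$) is the standard orthoscheme $\{0\le y_1\le\cdots\le y_n\le1\}\subset\mathbb R^n$ with $x_i$ at the vertex whose last $i$ coordinates are $1$ and the others $0$. A linear factorization of $g$ is $[x_L\ x_1\cdots x_k\ x_R]$ with entries in $\mathrm{Mon}(X)$, $x_1,\dots,x_k\ne1$, lengths summing to $\ell(g)$, product $g$. A weighted linear factorization of $g$ is a function $\mathbf u\colon[0,1]\to G$, trivial at all but finitely many points, such that with $0<s_1<\dots<s_k<1$ the points of $(0,1)$ where $\mathbf u$ is nontrivial, $P(\mathbf u)=[\mathbf u(0)\ \mathbf u(s_1)\cdots\mathbf u(s_k)\ \mathbf u(1)]$ is a linear factorization of $g$. $\mathrm{WFact}(G,g,\mathbf I)$ is the set of these with the following metric. For $G=\mathbb Z$, $X=\{1\}$, a weighted linear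 factorization $\mathbf s$ of $n$ (values are nonnegative integers summing to $n$) is identified with the point of the standard orthoscheme $\{0\le y_1\le\cdots\le y_n\le1\}$ obtained by listing, in nondecreasing order, each $r\in[0,1]$ repeated $\mathbf s(r)$ times. For general $G$, the map $L(\mathbf u)=\ell\circ\mathbf u$ sends each cell $\{\mathbf u:P(\mathbf u)=\mathbf x\}$ bijectively onto the open face $\{\mathbf s:P(\mathbf s)=L(\mathbf x)\}$ of this orthoscheme (where $L([x_L\cdots x_R])=[\ell(x_L)\cdots\ell(x_R)]$); pulling back the Euclidean metric on each cell and taking closures makes $\mathrm{WFact}(G,g,\mathbf I)$ a piecewise-Euclidean complex, with the induced length metric. *)

theory Defs
  imports "HOL-Algebra.Generated_Groups" "HOL-Analysis.Analysis"
begin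

definition wprod :: "('a, 'b) monoid_scheme \<Rightarrow> 'a list \<Rightarrow> 'a" where
  "wprod G ws = foldr (\<lambda>a b. a \<otimes>\<^bsub>G\<^esub> b) ws \<one>\<^bsub>G\<^esub>"

definition Mon :: "('a, 'b) monoid_scheme \<Rightarrow> 'a set \<Rightarrow> 'a set" where
  "Mon G X = {wprod G ws | ws. ws \<in> lists X}"

definition wlen :: "('a, 'b) monoid_scheme \<Rightarrow> 'a set \<Rightarrow> 'a \<Rightarrow> nat" where
  "wlen G X x = (LEAST n. \<exists>ws \<in> lists X. length ws = n \<and> wprod G ws = x)"

definition pleq :: "('a, 'b) monoid_scheme \<Rightarrow> 'a set \<Rightarrow> 'a \<Rightarrow> 'a \<Rightarrow> bool" where
  "pleq G X x y \<longleftrightarrow> x \<in> Mon G X \<and> y \<in> Mon G X \<and>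
     (\<exists>x' \<in> Mon G X. x \<otimes>\<^bsub>G\<^esub> x' = y \<and> wlen G X x + wlen G X x' = wlen G X y)"

definition pless :: "('a, 'b) monoid_scheme \<Rightarrow> 'a set \<Rightarrow> 'a \<Rightarrow> 'a \<Rightarrow> bool" where
  "pless G X x y \<longleftrightarrow> pleq G X x y \<and> x \<noteq> y"

definition interval :: "('a, 'b) monoid_scheme \<Rightarrow> 'a set \<Rightarrow> 'a \<Rightarrow> 'a set" where
  "interval G X g = {x. pleq G X x g}"

definition intrinsic_dist ::
  "'c set \<Rightarrow> ('c \<Rightarrow> 'p set) \<Rightarrow> ('c \<Rightarrow> 'p \<Rightarrow> 'p \<Rightarrow> real) \<Rightarrow> 'p \<Rightarrow> 'p \<Rightarrow> real" where
  "intrinsic_dist K cell d p q = Inf {len. \<exists>ps cs.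
      length ps = Suc (length cs) \<and> ps ! 0 = p \<and> last ps = q \<and>
      (\<forall>i < length cs. cs ! i \<in> K \<and> ps ! i \<in> cell (cs ! i) \<and> ps ! Suc i \<in> cell (cs ! i)) \<and>
      len = (\<Sum>i < length cs. d (cs ! i) (ps ! i) (ps ! Suc i))}"

definition is_chain :: "('a, 'b) monoid_scheme \<Rightarrow> 'a set \<Rightarrow> 'a set \<Rightarrow> bool" where
  "is_chain G X C \<longleftrightarrow> (\<forall>x \<in> C. \<forall>y \<in> C. pleq G X x y \<or> pleq G X y x)"

definition max_chains :: "('a, 'b) monoid_scheme \<Rightarrow> 'a set \<Rightarrow> 'a \<Rightarrow> 'a set set" where
  "max_chains G X g = {C. C \<subseteq> interval G X g \<and> is_chain G X C \<and>
      (\<forall>D. D \<subseteq> interval G X g \<and> is_chain G X D \<and> C \<subseteq> D \<longrightarrow> D = C)}"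

definition osimplex :: "'a set \<Rightarrow> ('a \<Rightarrow> real) set" where
  "osimplex C = {lam. (\<forall>x. 0 \<le> lam x) \<and> (\<forall>x. x \<notin> C \<longrightarrow> lam x = 0) \<and> sum lam C = 1}"

definition O_points :: "('a, 'b) monoid_scheme \<Rightarrow> 'a set \<Rightarrow> 'a \<Rightarrow> ('a \<Rightarrow> real) set" where
  "O_points G X g = (\<Union>C \<in> max_chains G X g. osimplex C)"

definition chain_idx :: "('a, 'b) monoid_scheme \<Rightarrow> 'a set \<Rightarrow> 'a set \<Rightarrow> 'a \<Rightarrow> nat" where
  "chain_idx G X C x = card {y \<in> C. pless G X y x}"

text \<open>Orthoscheme coordinate y_j (1 \<le> j \<le> n) of the point with barycentric coordinates lam
  in the simplex of C: vertex x_i has its last i coordinates equal to 1, the others 0.\<close>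
definition ortho_coord ::
  "('a, 'b) monoid_scheme \<Rightarrow> 'a set \<Rightarrow> nat \<Rightarrow> 'a set \<Rightarrow> ('a \<Rightarrow> real) \<Rightarrow> nat \<Rightarrow> real" where
  "ortho_coord G X n C lam j = (\<Sum>x \<in> {x \<in> C. chain_idx G X C x \<ge> n + 1 - j}. lam x)"

definition O_cell_dist ::
  "('a, 'b) monoid_scheme \<Rightarrow> 'a set \<Rightarrow> 'a \<Rightarrow> 'a set \<Rightarrow> ('a \<Rightarrow> real) \<Rightarrow> ('a \<Rightarrow> real) \<Rightarrow> real" where
  "O_cell_dist G X g C lam mu =
     sqrt (\<Sum>j \<in> {1..wlen G X g}.
       (ortho_coord G X (wlen G X g) C lam j - ortho_coord G X (wlen G X g) C mu j)\<^sup>2)"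

definition O_dist ::
  "('a, 'b) monoid_scheme \<Rightarrow> 'a set \<Rightarrow> 'a \<Rightarrow> ('a \<Rightarrow> real) \<Rightarrow> ('a \<Rightarrow> real) \<Rightarrow> real" where
  "O_dist G X g = intrinsic_dist (max_chains G X g) osimplex (O_cell_dist G X g)"

text \<open>A linear factorization [x_L x_1 ... x_k x_R] as a list of length k+2.\<close>
definition lin_fact :: "('a, 'b) monoid_scheme \<Rightarrow> 'a set \<Rightarrow> 'a \<Rightarrow> 'a list \<Rightarrow> bool" where
  "lin_fact G X g xs \<longleftrightarrow> length xs \<ge> 2 \<and> set xs \<subseteq> Mon G X \<and>
     (\<forall>i. 0 < i \<and> i < length xs - 1 \<longrightarrow> xs ! i \<noteq> \<one>\<^bsub>G\<^esub>) \<and>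
     (\<Sum>x \<leftarrow> xs. wlen G X x) = wlen G X g \<and> wprod G xs = g"

text \<open>Functions u : [0,1] \<rightarrow> G are represented as functions real \<Rightarrow> 'a that are trivial
  outside [0,1].\<close>
definition wsupp :: "('a, 'b) monoid_scheme \<Rightarrow> (real \<Rightarrow> 'a) \<Rightarrow> real set" where
  "wsupp G u = {r. 0 < r \<and> r < 1 \<and> u r \<noteq> \<one>\<^bsub>G\<^esub>}"

definition Pfact :: "('a, 'b) monoid_scheme \<Rightarrow> (real \<Rightarrow> 'a) \<Rightarrow> 'a list" where
  "Pfact G u = [u 0] @ map u (sorted_list_of_set (wsupp G u)) @ [u 1]"

definition WFact :: "('a, 'b) monoid_scheme \<Rightarrow> 'a set \<Rightarrow> 'a \<Rightarrow> (real \<Rightarrow> 'a) set" where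
  "WFact G X g = {u. (\<forall>r. (r < 0 \<or> r > 1) \<longrightarrow> u r = \<one>\<^bsub>G\<^esub>) \<and> finite (wsupp G u) \<and>
      lin_fact G X g (Pfact G u)}"

definition Lmap :: "('a, 'b) monoid_scheme \<Rightarrow> 'a set \<Rightarrow> (real \<Rightarrow> 'a) \<Rightarrow> real \<Rightarrow> nat" where
  "Lmap G X u = (\<lambda>r. if 0 \<le> r \<and> r \<le> 1 then wlen G X (u r) else 0)"

text \<open>Point of the standard orthoscheme attached to a weighted linear factorization s of n in Z:
  each r \<in> [0,1] repeated s(r) times, in nondecreasing order.\<close>
definition ortho_point :: "(real \<Rightarrow> nat) \<Rightarrow> real list" where
  "ortho_point s = sort (concat (map (\<lambda>r. replicate (s r) r)
      (sorted_list_of_set {r. 0 \<le> r \<and> r \<le> 1 \<and> s r \<noteq> 0})))"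

definition eucl_list_dist :: "nat \<Rightarrow> real list \<Rightarrow> real list \<Rightarrow> real" where
  "eucl_list_dist n a b = sqrt (\<Sum>i < n. (a ! i - b ! i)\<^sup>2)"

text \<open>Closed cell of a linear factorization xs = [x_L x_1..x_k x_R]: the characteristic map
  sends 0 \<le> s_1 \<le> ... \<le> s_k \<le> 1 to the weighted factorization which at r is the ordered
  product of the x_i with s_i = r (with x_L prepended at 0 and x_R appended at 1).
  For 0 < s_1 < ... < s_k < 1 this is the open cell {u. P(u) = xs}.\<close>
definition char_map :: "('a, 'b) monoid_scheme \<Rightarrow> 'a list \<Rightarrow> (nat \<Rightarrow> real) \<Rightarrow> real \<Rightarrow> 'a" where
  "char_map G xs s r =
     (let k = length xs - 2;
          mid = wprod G (map (\<lambda>i. xs ! i) (filter (\<lambda>i. s i = r) [1..<k+1]))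
      in if r = 0 then xs ! 0 \<otimes>\<^bsub>G\<^esub> mid
         else if r = 1 then mid \<otimes>\<^bsub>G\<^esub> xs ! (k+1)
         else if 0 < r \<and> r < 1 then mid
         else \<one>\<^bsub>G\<^esub>)"

definition W_cell :: "('a, 'b) monoid_scheme \<Rightarrow> 'a list \<Rightarrow> (real \<Rightarrow> 'a) set" where
  "W_cell G xs = {char_map G xs s | s.
      (let k = length xs - 2 in
        (k > 0 \<longrightarrow> 0 \<le> s 1 \<and> s k \<le> 1) \<and> (\<forall>i. 1 \<le> i \<and> i < k \<longrightarrow> s i \<le> s (Suc i)))}"

definition W_cell_dist ::
  "('a, 'b) monoid_scheme \<Rightarrow> 'a set \<Rightarrow> 'a \<Rightarrow> 'a list \<Rightarrow> (real \<Rightarrow> 'a) \<Rightarrow> (real \<Rightarrow> 'a) \<Rightarrow> real" where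
  "W_cell_dist G X g xs u v =
     eucl_list_dist (wlen G X g) (ortho_point (Lmap G X u)) (ortho_point (Lmap G X v))"

definition W_dist ::
  "('a, 'b) monoid_scheme \<Rightarrow> 'a set \<Rightarrow> 'a \<Rightarrow> (real \<Rightarrow> 'a) \<Rightarrow> (real \<Rightarrow> 'a) \<Rightarrow> real" where
  "W_dist G X g = intrinsic_dist {xs. lin_fact G X g xs} (W_cell G) (W_cell_dist G X g)"

definition isometric_spaces :: "'p set \<Rightarrow> ('p \<Rightarrow> 'p \<Rightarrow> real) \<Rightarrow> 'q set \<Rightarrow> ('q \<Rightarrow> 'q \<Rightarrow> real) \<Rightarrow> bool" where
  "isometric_spaces A dA B dB \<longleftrightarrow>
     (\<exists>f. bij_betw f A B \<and> (\<forall>p \<in> A. \<forall>q \<in> A. dB (f p) (f q) = dA p q))"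

end

theory Submission
  imports Defs
begin

(* A maximal chain of [1,g] is the chain of prefix products 1 = x_0 < x_1 < ... < x_n = g of a
  reduced word w for g (a word in X of length n = l(g) with product g), so a point of O_g is
  given by such a w and times 0 <= t_1 <= ... <= t_n <= 1, the vertex x_i carrying weight
  t_(i+1) - t_i. The same data give the weighted factorization placing the i-th letter of w at
  time t_i, and refining the factors of any weighted factorization into reduced words shows that
  every point of WFact arises in this way. Both the simplex point and the weighted factorization
  determine the times and the prefix products x_i at the jumps t_i < t_(i+1), and are determined
  by them; this gives a bijection. On both sides the cell metric becomes the Euclidean distance of
  the time vectors, and each closed cell lies in the image of one orthoscheme of the other side,
  so strings, and hence intrinsic distances, correspond. *)

definition count_below :: "'b::linorder list \<Rightarrow> 'b \<Rightarrow> nat" where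
  "count_below ts r = length (filter (\<lambda>t. t < r) ts)"

definition count_upto :: "'b::linorder list \<Rightarrow> 'b \<Rightarrow> nat" where
  "count_upto ts r = length (filter (\<lambda>t. t \<le> r) ts)"

lemma sorted_nth_iff_less_length_filter:
  assumes sorted: "sorted ts" and j: "j < length ts" and down: "\<And>x y. x \<le> y \<Longrightarrow> P y \<Longrightarrow> P x"
  shows "P (ts ! j) \<longleftrightarrow> j < length (filter P ts)"
proof
  assume "P (ts ! j)"
  then have "P (ts ! i)" if "i \<le> j" for i
    using down sorted_nth_mono[OF sorted that j] by blast
  then have "{..j} \<subseteq> {i. i < length ts \<and> P (ts ! i)}"
    using j by auto
  then have "card {..j} \<le> length (filter P ts)"
    unfolding length_filter_conv_card by (rule card_mono[rotated]) simp
  then show "j < length (filter P ts)"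
    by simp
next
  assume less: "j < length (filter P ts)"
  show "P (ts ! j)"
  proof (rule ccontr)
    assume "\<not> P (ts ! j)"
    then have "\<not> P (ts ! i)" if "j \<le> i" "i < length ts" for i
      using down sorted_nth_mono[OF sorted that] by blast
    then have "{i. i < length ts \<and> P (ts ! i)} \<subseteq> {..<j}"
      by (auto simp: not_less[symmetric])
    then have "length (filter P ts) \<le> j"
      unfolding length_filter_conv_card using card_mono[of "{..<j}"] by simp
    with less show False
      by simp
  qed
qed

lemma sorted_nth_less_iff:
  "sorted ts \<Longrightarrow> j < length ts \<Longrightarrow> ts ! j < r \<longleftrightarrow> j < count_below ts r"
  unfolding count_below_def by (rule sorted_nth_iff_less_length_filter) auto

lemma sorted_nth_le_iff:
  "sorted ts \<Longrightarrow> j < length ts \<Longrightarrow> ts ! j \<le> r \<longleftrightarrow> j < count_upto ts r"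
  unfolding count_upto_def by (rule sorted_nth_iff_less_length_filter) auto

lemma count_upto_eq: "count_upto ts r = count_below ts r + count_list ts r"
  unfolding count_upto_def count_below_def by (induction ts) auto

lemma count_upto_le_length: "count_upto ts r \<le> length ts"
  unfolding count_upto_def by simp

lemma sorted_split_at:
  assumes "sorted (map f xs)"
  shows "xs = filter (\<lambda>x. f x < r) xs @ filter (\<lambda>x. f x = r) xs @ filter (\<lambda>x. r < f x) xs"
  using assms
proof (induction xs)
  case (Cons x xs)
  then have IH: "xs = filter (\<lambda>x. f x < r) xs @ filter (\<lambda>x. f x = r) xs @ filter (\<lambda>x. r < f x) xs"
    and above: "\<forall>y\<in>set xs. f x \<le> f y"
    by auto
  consider "f x < r" | "f x = r" | "r < f x"
    using less_linear by blast
  then show ?case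
  proof cases
    case 1
    then have "f x \<noteq> r" "\<not> r < f x"
      using less_not_sym[OF 1] by auto
    then show ?thesis
      using IH 1 by simp
  next
    case 2
    then have "filter (\<lambda>x. f x < r) xs = []"
      using above by (auto simp: filter_empty_conv)
    then show ?thesis
      using IH 2 by simp
  next
    case 3
    then have "filter (\<lambda>x. f x < r) xs = []" "filter (\<lambda>x. f x = r) xs = []"
      using above by (auto simp: filter_empty_conv)
    moreover have "\<not> f x < r" "f x \<noteq> r"
      using less_not_sym[OF 3] 3 by auto
    ultimately show ?thesis
      using IH 3 by simp
  qed
qed simp

lemma count_list_replicate: "count_list (replicate k r) x = (if r = x then k else 0)"
  by (induction k) auto

lemma mset_concat_replicate_count_list:
  assumes "distinct R" "set ts \<subseteq> set R"
  shows "mset (concat (map (\<lambda>r. replicate (count_list ts r) r) R)) = mset ts"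
proof (rule multiset_eqI)
  fix x
  have "count (mset (concat (map (\<lambda>r. replicate (count_list ts r) r) R))) x
      = sum_list (map (\<lambda>r. count_list (replicate (count_list ts r) r) x) R)"
    unfolding count_mset count_list_concat by (simp add: o_def)
  also have "\<dots> = (\<Sum>r\<in>set R. count_list (replicate (count_list ts r) r) x)"
    using assms(1) by (rule sum_list_distinct_conv_sum_set)
  also have "\<dots> = (\<Sum>r\<in>set R. if r = x then count_list ts x else 0)"
    by (rule sum.cong) (auto simp: count_list_replicate)
  also have "\<dots> = count (mset ts) x"
    using assms(2) by (auto simp: count_mset count_list_0_iff)
  finally show "count (mset (concat (map (\<lambda>r. replicate (count_list ts r) r) R))) x = count (mset ts) x" .
qed

lemma sum_list_count_list:
  assumes "distinct R" "set ts \<subseteq> set R"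
  shows "sum_list (map (count_list ts) R) = length ts"
proof -
  have "size (mset (concat (map (\<lambda>r. replicate (count_list ts r) r) R))) = size (mset ts)"
    using mset_concat_replicate_count_list[OF assms] by simp
  then show ?thesis
    by (simp add: length_concat o_def)
qed

lemma ortho_point_count_list:
  assumes "sorted ts" "set ts \<subseteq> {0..1}"
  shows "ortho_point (count_list ts) = ts"
proof -
  define R where "R = sorted_list_of_set (set ts)"
  have support: "{r. 0 \<le> r \<and> r \<le> 1 \<and> count_list ts r \<noteq> 0} = set R"
    using assms(2) unfolding R_def by (auto simp: count_list_0_iff)
  have "mset (concat (map (\<lambda>r. replicate (count_list ts r) r) R)) = mset ts"
    by (rule mset_concat_replicate_count_list) (simp_all add: R_def)
  then show ?thesis
    unfolding ortho_point_def support R_def using properties_for_sort[OF _ assms(1)] by simp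
qed

lemma zip_concat_map:
  "(\<And>i. i \<in> set I \<Longrightarrow> length (as i) = length (bs i))
    \<Longrightarrow> zip (concat (map as I)) (concat (map bs I)) = concat (map (\<lambda>i. zip (as i) (bs i)) I)"
  by (induction I) auto

lemma zip_padded:
  assumes len: "length xs = k + 2"
  shows "zip xs (a # map s [1..<k+1] @ [b])
    = [(xs ! 0, a)] @ map (\<lambda>i. (xs ! i, s i)) [1..<k+1] @ [(xs ! (k + 1), b)]"
proof -
  define I where "I = [1..<k+1]"
  have "[0..<k+2] = [0] @ I @ [k+1]"
    unfolding I_def by (simp add: upt_conv_Cons)
  then have xs_eq: "[xs ! 0] @ map (\<lambda>i. xs ! i) I @ [xs ! (k + 1)] = xs"
    using map_nth[of xs] len by (metis map_append list.simps(8,9))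
  have "zip (map (\<lambda>i. xs ! i) J) (map s J) = map (\<lambda>i. (xs ! i, s i)) J" for J :: "nat list"
    by (induction J) auto
  then have "zip ([xs ! 0] @ map (\<lambda>i. xs ! i) I @ [xs ! (k + 1)]) (a # map s I @ [b])
      = [(xs ! 0, a)] @ map (\<lambda>i. (xs ! i, s i)) I @ [(xs ! (k + 1), b)]"
    by simp
  then show ?thesis
    unfolding xs_eq by (simp only: I_def)
qed

lemma map_nth_pairs_eq_zip:
  "length ys = length xs \<Longrightarrow> map (\<lambda>i. (xs ! i, ys ! i)) [0..<length xs] = zip xs ys"
  by (rule nth_equalityI) auto

lemma filter_eq_distinct: "distinct xs \<Longrightarrow> filter (\<lambda>y. y = x) xs = (if x \<in> set xs then [x] else [])"
  by (induction xs) (auto simp: filter_empty_conv)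

lemma sorted_concat_replicate:
  "sorted (map f I) \<Longrightarrow> sorted (concat (map (\<lambda>i. replicate (c i) (f i)) I))"
  by (induction I) (auto simp: sorted_append)

lemma concat_filter_keys:
  assumes "sorted R" "distinct R" "set (map f L) \<subseteq> set R" "sorted (map f L)"
  shows "concat (map (\<lambda>r. filter (\<lambda>p. f p = r) L) R) = L"
  using assms
proof (induction R arbitrary: L)
  case (Cons r R)
  have above: "\<forall>q\<in>set R. r < q"
    using Cons.prems(1,2) by (auto simp: less_le)
  have "r \<le> f p" if "p \<in> set L" for p
    using Cons.prems(3) above that by fastforce
  then have "filter (\<lambda>p. f p < r) L = []"
    by (auto simp: filter_empty_conv not_less)
  then have split: "L = filter (\<lambda>p. f p = r) L @ filter (\<lambda>p. r < f p) L"
    using sorted_split_at[OF Cons.prems(4), of r] by simp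
  have same: "filter (\<lambda>p. f p = q) L = filter (\<lambda>p. f p = q) (filter (\<lambda>p. r < f p) L)"
    if "q \<in> set R" for q
    using above that by (subst split) (auto simp: filter_empty_conv)
  have "concat (map (\<lambda>q. filter (\<lambda>p. f p = q) L) R)
      = concat (map (\<lambda>q. filter (\<lambda>p. f p = q) (filter (\<lambda>p. r < f p) L)) R)"
    by (intro arg_cong[where f = concat] map_cong refl same)
  also have "\<dots> = filter (\<lambda>p. r < f p) L"
    by (rule Cons.IH) (use Cons.prems in \<open>auto simp: sorted_filter\<close>)
  finally show ?case
    using split by simp
qed simp

lemma sorted_padded_times:
  fixes s :: "nat \<Rightarrow> real"
  assumes ends: "0 < k \<longrightarrow> 0 \<le> s 1 \<and> s k \<le> 1" and steps: "\<forall>i. 1 \<le> i \<and> i < k \<longrightarrow> s i \<le> s (Suc i)"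
  shows "sorted (0 # map s [1..<k+1] @ [1]) \<and> set (0 # map s [1..<k+1] @ [1]) \<subseteq> {0..1}"
proof -
  have mono: "s i \<le> s j" if "1 \<le> i" "i \<le> j" "j \<le> k" for i j
    using that
  proof (induction j)
    case (Suc j)
    then show ?case
      using steps by (cases "i = Suc j") (auto intro: order_trans)
  qed simp
  have "sorted (map s [1..<k+1])"
    unfolding sorted_map by (rule sorted_wrt_mono_rel[OF _ sorted_wrt_upt]) (auto intro: mono)
  moreover have "0 \<le> s i \<and> s i \<le> 1" if "1 \<le> i" "i \<le> k" for i
    using mono[of 1 i] mono[of i k] ends that by auto
  ultimately show ?thesis
    by (auto simp: sorted_append)
qed

section \<open>Intrinsic metrics of cell complexes\<close>

definition string_lengths ::
  "'c set \<Rightarrow> ('c \<Rightarrow> 'p set) \<Rightarrow> ('c \<Rightarrow> 'p \<Rightarrow> 'p \<Rightarrow> real) \<Rightarrow> 'p \<Rightarrow> 'p \<Rightarrow> real set" where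
  "string_lengths K cell d p q = {len. \<exists>ps cs.
      length ps = Suc (length cs) \<and> ps ! 0 = p \<and> last ps = q \<and>
      (\<forall>i < length cs. cs ! i \<in> K \<and> ps ! i \<in> cell (cs ! i) \<and> ps ! Suc i \<in> cell (cs ! i)) \<and>
      len = (\<Sum>i < length cs. d (cs ! i) (ps ! i) (ps ! Suc i))}"

lemma intrinsic_dist_eq_Inf: "intrinsic_dist K cell d p q = Inf (string_lengths K cell d p q)"
  unfolding intrinsic_dist_def string_lengths_def ..

lemma string_lengths_transfer:
  assumes cellwise: "\<And>c p q. c \<in> K \<Longrightarrow> p \<in> cell c \<Longrightarrow> q \<in> cell c \<Longrightarrow>
      \<exists>c'\<in>K'. f p \<in> cell' c' \<and> f q \<in> cell' c' \<and> d' c' (f p) (f q) = d c p q"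
  shows "string_lengths K cell d p q \<subseteq> string_lengths K' cell' d' (f p) (f q)"
proof
  fix len assume "len \<in> string_lengths K cell d p q"
  then obtain ps cs where len_ps: "length ps = Suc (length cs)" and ends: "ps ! 0 = p" "last ps = q"
    and cells: "\<forall>i < length cs. cs ! i \<in> K \<and> ps ! i \<in> cell (cs ! i) \<and> ps ! Suc i \<in> cell (cs ! i)"
    and len: "len = (\<Sum>i < length cs. d (cs ! i) (ps ! i) (ps ! Suc i))"
    unfolding string_lengths_def by blast
  define c' where "c' i = (SOME c'. c' \<in> K' \<and> f (ps ! i) \<in> cell' c' \<and> f (ps ! Suc i) \<in> cell' c'
      \<and> d' c' (f (ps ! i)) (f (ps ! Suc i)) = d (cs ! i) (ps ! i) (ps ! Suc i))" for i
  have c': "c' i \<in> K' \<and> f (ps ! i) \<in> cell' (c' i) \<and> f (ps ! Suc i) \<in> cell' (c' i)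
      \<and> d' (c' i) (f (ps ! i)) (f (ps ! Suc i)) = d (cs ! i) (ps ! i) (ps ! Suc i)" if i: "i < length cs" for i
  proof -
    obtain c where c: "c \<in> K'" "f (ps ! i) \<in> cell' c" "f (ps ! Suc i) \<in> cell' c"
      "d' c (f (ps ! i)) (f (ps ! Suc i)) = d (cs ! i) (ps ! i) (ps ! Suc i)"
      using cellwise[of "cs ! i" "ps ! i" "ps ! Suc i"] cells i by blast
    show ?thesis
      unfolding c'_def by (rule someI[of _ c]) (use c in blast)
  qed
  define ps' cs' where "ps' = map f ps" and "cs' = map c' [0..<length cs]"
  have "ps \<noteq> []"
    using len_ps by auto
  then have "ps' ! 0 = f p" "last ps' = f q"
    unfolding ps'_def using ends by (auto simp: last_map)
  moreover have "len = (\<Sum>i < length cs'. d' (cs' ! i) (ps' ! i) (ps' ! Suc i))"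
    unfolding len ps'_def cs'_def using c' len_ps by (intro sum.cong) auto
  moreover have "\<forall>i < length cs'. cs' ! i \<in> K' \<and> ps' ! i \<in> cell' (cs' ! i) \<and> ps' ! Suc i \<in> cell' (cs' ! i)"
    unfolding ps'_def cs'_def using c' len_ps by auto
  moreover have "length ps' = Suc (length cs')"
    unfolding ps'_def cs'_def using len_ps by simp
  ultimately show "len \<in> string_lengths K' cell' d' (f p) (f q)"
    unfolding string_lengths_def by blast
qed

lemma isometric_spaces_intrinsic:
  assumes bij: "bij_betw f A B"
    and cells': "\<And>c'. c' \<in> K' \<Longrightarrow> cell' c' \<subseteq> B"
    and fwd: "\<And>c p q. c \<in> K \<Longrightarrow> p \<in> cell c \<Longrightarrow> q \<in> cell c \<Longrightarrow>
      \<exists>c'\<in>K'. f p \<in> cell' c' \<and> f q \<in> cell' c' \<and> d' c' (f p) (f q) = d c p q"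
    and bwd: "\<And>c' p q. c' \<in> K' \<Longrightarrow> p \<in> A \<Longrightarrow> q \<in> A \<Longrightarrow> f p \<in> cell' c' \<Longrightarrow> f q \<in> cell' c' \<Longrightarrow>
      \<exists>c\<in>K. p \<in> cell c \<and> q \<in> cell c \<and> d c p q = d' c' (f p) (f q)"
  shows "isometric_spaces A (intrinsic_dist K cell d) B (intrinsic_dist K' cell' d')"
proof -
  define h where "h = inv_into A f"
  have hf: "h (f p) = p" if "p \<in> A" for p
    unfolding h_def using bij that by (simp add: bij_betw_def)
  have fh: "f (h p') = p'" "h p' \<in> A" if "p' \<in> B" for p'
    unfolding h_def using bij that by (auto simp: bij_betw_def f_inv_into_f inv_into_into)
  have bwd': "\<exists>c\<in>K. h p' \<in> cell c \<and> h q' \<in> cell c \<and> d c (h p') (h q') = d' c' p' q'"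
    if "c' \<in> K'" "p' \<in> cell' c'" "q' \<in> cell' c'" for c' p' q'
  proof -
    have "p' \<in> B" "q' \<in> B"
      using cells'[OF that(1)] that(2,3) by auto
    then show ?thesis
      using bwd[OF that(1) fh(2) fh(2), of p' q'] fh(1) that by simp
  qed
  have "intrinsic_dist K' cell' d' (f p) (f q) = intrinsic_dist K cell d p q" if "p \<in> A" "q \<in> A" for p q
  proof -
    have "string_lengths K' cell' d' (f p) (f q) \<subseteq> string_lengths K cell d (h (f p)) (h (f q))"
      using bwd' by (rule string_lengths_transfer)
    moreover have "string_lengths K cell d p q \<subseteq> string_lengths K' cell' d' (f p) (f q)"
      using fwd by (rule string_lengths_transfer)
    ultimately have "string_lengths K' cell' d' (f p) (f q) = string_lengths K cell d p q"
      using hf that by auto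
    then show ?thesis
      unfolding intrinsic_dist_eq_Inf by simp
  qed
  then show ?thesis
    unfolding isometric_spaces_def using bij by blast
qed

section \<open>Words and the order on Mon(X)\<close>

locale generated_monoid = group G for G (structure) +
  fixes X :: "'a set"
  assumes gens_closed: "X \<subseteq> carrier G"
begin

lemma wprod_Nil [simp]: "wprod G [] = \<one>"
  by (simp add: wprod_def)

lemma wprod_Cons [simp]: "wprod G (a # ws) = a \<otimes> wprod G ws"
  by (simp add: wprod_def)

lemma wprod_closed: "set ws \<subseteq> carrier G \<Longrightarrow> wprod G ws \<in> carrier G"
  by (induction ws) auto

lemma wprod_append:
  "set xs \<subseteq> carrier G \<Longrightarrow> set ys \<subseteq> carrier G \<Longrightarrow> wprod G (xs @ ys) = wprod G xs \<otimes> wprod G ys"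
  by (induction xs) (auto simp: wprod_closed m_assoc)

lemma wprod_concat:
  "(\<And>l. l \<in> set ls \<Longrightarrow> set l \<subseteq> carrier G) \<Longrightarrow> wprod G (concat ls) = wprod G (map (wprod G) ls)"
proof (induction ls)
  case (Cons l ls)
  then have "set (concat ls) \<subseteq> carrier G"
    by auto
  with Cons show ?case
    using wprod_append[of l "concat ls"] by simp
qed simp

lemma lists_gens_carrier: "ws \<in> lists X \<Longrightarrow> set ws \<subseteq> carrier G"
  using gens_closed by auto

lemma Mon_wprod: "ws \<in> lists X \<Longrightarrow> wprod G ws \<in> Mon G X"
  unfolding Mon_def by blast

lemma Mon_closed: "x \<in> Mon G X \<Longrightarrow> x \<in> carrier G"
  unfolding Mon_def using wprod_closed lists_gens_carrier by blast

lemma one_Mon: "\<one> \<in> Mon G X"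
  using Mon_wprod[of "[]"] by simp

lemma Mon_mult:
  assumes "x \<in> Mon G X" "y \<in> Mon G X"
  shows "x \<otimes> y \<in> Mon G X"
proof -
  obtain xs ys where "xs \<in> lists X" "ys \<in> lists X" "x = wprod G xs" "y = wprod G ys"
    using assms unfolding Mon_def by blast
  then show ?thesis
    using Mon_wprod[of "xs @ ys"] wprod_append lists_gens_carrier by auto
qed

lemma wlen_witness:
  assumes "x \<in> Mon G X"
  shows "\<exists>ws \<in> lists X. length ws = wlen G X x \<and> wprod G ws = x"
proof -
  from assms have "\<exists>m. \<exists>ws \<in> lists X. length ws = m \<and> wprod G ws = x"
    unfolding Mon_def by blast
  from LeastI_ex[OF this] show ?thesis
    unfolding wlen_def by blast
qed

lemma wlen_wprod_le: "ws \<in> lists X \<Longrightarrow> wlen G X (wprod G ws) \<le> length ws"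
  unfolding wlen_def by (rule Least_le) blast

lemma wlen_mult_le:
  assumes "x \<in> Mon G X" "y \<in> Mon G X"
  shows "wlen G X (x \<otimes> y) \<le> wlen G X x + wlen G X y"
proof -
  obtain xs ys where "xs \<in> lists X" "length xs = wlen G X x" "wprod G xs = x"
    and "ys \<in> lists X" "length ys = wlen G X y" "wprod G ys = y"
    using wlen_witness assms by meson
  then show ?thesis
    using wlen_wprod_le[of "xs @ ys"] wprod_append lists_gens_carrier by auto
qed

lemma wlen_one [simp]: "wlen G X \<one> = 0"
  using wlen_wprod_le[of "[]"] by simp

lemma wlen_eq_0D: "x \<in> Mon G X \<Longrightarrow> wlen G X x = 0 \<Longrightarrow> x = \<one>"
  using wlen_witness by force

lemma wlen_eq_1D:
  assumes "x \<in> Mon G X" "wlen G X x = 1"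
  shows "x \<in> X"
proof -
  obtain ws where "ws \<in> lists X" "length ws = 1" "wprod G ws = x"
    using wlen_witness assms by force
  then show ?thesis
    using gens_closed by (cases ws) auto
qed

definition geodesic :: "'a list \<Rightarrow> bool" where
  "geodesic ws \<longleftrightarrow> ws \<in> lists X \<and> wlen G X (wprod G ws) = length ws"

lemma geodesic_infix:
  assumes "geodesic (as @ bs @ cs)"
  shows "geodesic bs"
proof -
  have l: "as \<in> lists X" "bs \<in> lists X" "cs \<in> lists X"
    using assms unfolding geodesic_def by auto
  then have M: "wprod G as \<in> Mon G X" "wprod G bs \<in> Mon G X" "wprod G cs \<in> Mon G X"
    using Mon_wprod by auto
  have "length (as @ bs @ cs) = wlen G X (wprod G as \<otimes> (wprod G bs \<otimes> wprod G cs))"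
    using assms l wprod_append lists_gens_carrier unfolding geodesic_def by auto
  also have "\<dots> \<le> wlen G X (wprod G as) + wlen G X (wprod G bs \<otimes> wprod G cs)"
    using wlen_mult_le M Mon_mult by blast
  also have "\<dots> \<le> wlen G X (wprod G as) + (wlen G X (wprod G bs) + wlen G X (wprod G cs))"
    using wlen_mult_le M by simp
  finally have "length bs \<le> wlen G X (wprod G bs)"
    using wlen_wprod_le[OF l(1)] wlen_wprod_le[OF l(3)] by simp
  then show ?thesis
    using wlen_wprod_le[OF l(2)] l unfolding geodesic_def by simp
qed

lemma geodesic_take: "geodesic ws \<Longrightarrow> geodesic (take i ws)"
  using geodesic_infix[of "[]" "take i ws" "drop i ws"] by simp

lemma geodesic_drop: "geodesic ws \<Longrightarrow> geodesic (drop i ws)"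
  using geodesic_infix[of "take i ws" "drop i ws" "[]"] by simp

lemma geodesic_witness:
  "x \<in> Mon G X \<Longrightarrow> \<exists>ws. geodesic ws \<and> wprod G ws = x \<and> length ws = wlen G X x"
  using wlen_witness unfolding geodesic_def by fastforce

lemma pleq_Mon: "pleq G X x y \<Longrightarrow> x \<in> Mon G X \<and> y \<in> Mon G X"
  unfolding pleq_def by auto

lemma pleq_refl: "x \<in> Mon G X \<Longrightarrow> pleq G X x x"
  unfolding pleq_def using one_Mon Mon_closed by force

lemma pleq_one: "x \<in> Mon G X \<Longrightarrow> pleq G X \<one> x"
  unfolding pleq_def using one_Mon Mon_closed by force

lemma pleq_wlen: "pleq G X x y \<Longrightarrow> wlen G X x \<le> wlen G X y"
  unfolding pleq_def by auto

lemma pleq_wlen_eqD: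
  assumes "pleq G X x y" "wlen G X x = wlen G X y"
  shows "x = y"
proof -
  obtain x' where "x' \<in> Mon G X" "x \<otimes> x' = y" "wlen G X x + wlen G X x' = wlen G X y"
    using assms(1) unfolding pleq_def by blast
  then show ?thesis
    using assms wlen_eq_0D Mon_closed pleq_Mon by fastforce
qed

lemma pleq_trans:
  assumes "pleq G X x y" "pleq G X y z"
  shows "pleq G X x z"
proof -
  obtain x' y' where x': "x' \<in> Mon G X" "x \<otimes> x' = y" "wlen G X x + wlen G X x' = wlen G X y"
    and y': "y' \<in> Mon G X" "y \<otimes> y' = z" "wlen G X y + wlen G X y' = wlen G X z"
    using assms unfolding pleq_def by blast
  have M: "x \<in> Mon G X" "z \<in> Mon G X" "x' \<otimes> y' \<in> Mon G X"
    using assms pleq_Mon Mon_mult x' y' by auto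
  have z: "x \<otimes> (x' \<otimes> y') = z"
    using Mon_closed M x'(1,2) y'(1,2) by (auto simp: m_assoc)
  have "wlen G X z \<le> wlen G X x + wlen G X (x' \<otimes> y')"
    using wlen_mult_le[OF M(1,3)] z by simp
  moreover have "wlen G X (x' \<otimes> y') \<le> wlen G X x' + wlen G X y'"
    using wlen_mult_le x' y' by blast
  ultimately have "wlen G X x + wlen G X (x' \<otimes> y') = wlen G X z"
    using x'(3) y'(3) by linarith
  then show ?thesis
    unfolding pleq_def using M z by blast
qed

lemma pleq_step_letter:
  assumes "pleq G X x y" "wlen G X y = Suc (wlen G X x)"
  shows "inv x \<otimes> y \<in> X"
proof -
  obtain x' where x': "x' \<in> Mon G X" "x \<otimes> x' = y" "wlen G X x + wlen G X x' = wlen G X y"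
    using assms(1) unfolding pleq_def by blast
  have "inv x \<otimes> y = x'"
    using x' pleq_Mon[OF assms(1)] Mon_closed by (auto simp: m_assoc[symmetric])
  then show ?thesis
    using wlen_eq_1D[OF x'(1)] x'(3) assms(2) by simp
qed

lemma pleq_interpolate:
  assumes yz: "pleq G X y z" and j: "wlen G X y \<le> j" "j \<le> wlen G X z"
  shows "\<exists>m. pleq G X y m \<and> pleq G X m z \<and> wlen G X m = j"
proof -
  obtain y' where y': "y' \<in> Mon G X" "y \<otimes> y' = z" "wlen G X y + wlen G X y' = wlen G X z"
    using yz unfolding pleq_def by blast
  obtain v where v: "geodesic v" "wprod G v = y'" "length v = wlen G X y'"
    using geodesic_witness[OF y'(1)] by blast
  define v1 v2 where "v1 = take (j - wlen G X y) v" and "v2 = drop (j - wlen G X y) v"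
  have geo: "geodesic v1" "geodesic v2"
    unfolding v1_def v2_def using geodesic_take geodesic_drop v(1) by auto
  then have len: "wlen G X (wprod G v1) = j - wlen G X y" "wlen G X (wprod G v2) = wlen G X z - j"
    using v(3) y'(3) j unfolding geodesic_def v1_def v2_def by auto
  have M: "y \<in> Mon G X" "wprod G v1 \<in> Mon G X" "wprod G v2 \<in> Mon G X"
    using yz pleq_Mon geo Mon_wprod unfolding geodesic_def by auto
  define m where "m = y \<otimes> wprod G v1"
  have mM: "m \<in> Mon G X"
    unfolding m_def using Mon_mult M by blast
  have z: "m \<otimes> wprod G v2 = z"
    using y' v(2) M Mon_closed wprod_append[of v1 v2] lists_gens_carrier geo
    unfolding m_def v1_def v2_def geodesic_def by (simp add: m_assoc)
  have "wlen G X m \<le> j"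
    using wlen_mult_le[OF M(1,2)] len j unfolding m_def by simp
  moreover have "wlen G X z \<le> wlen G X m + (wlen G X z - j)"
    using wlen_mult_le[OF mM M(3)] z len by simp
  ultimately have mj: "wlen G X m = j"
    using j by simp
  have "pleq G X y m"
    unfolding pleq_def using M mM len mj j unfolding m_def by auto
  moreover have "pleq G X m z"
    unfolding pleq_def using M mM len mj j z yz pleq_Mon by auto
  ultimately show ?thesis
    using mj by blast
qed

text \<open>A weighted factorization given by a list of (element, time) pairs.\<close>

definition timed_prod :: "('a \<times> real) list \<Rightarrow> real \<Rightarrow> 'a" where
  "timed_prod L r = (if 0 \<le> r \<and> r \<le> 1 then wprod G (map fst (filter (\<lambda>p. snd p = r) L)) else \<one>)"

lemma timed_prod_outside: "\<not> (0 \<le> r \<and> r \<le> 1) \<Longrightarrow> timed_prod L r = \<one>"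
  unfolding timed_prod_def by auto

lemma timed_prod_closed:
  assumes "fst ` set L \<subseteq> carrier G"
  shows "timed_prod L r \<in> carrier G"
proof -
  have "set (map fst (filter (\<lambda>p. snd p = r) L)) \<subseteq> fst ` set L"
    by auto
  then show ?thesis
    unfolding timed_prod_def using assms wprod_closed by auto
qed

lemma timed_prod_append:
  assumes "fst ` set L \<subseteq> carrier G" "fst ` set L' \<subseteq> carrier G"
  shows "timed_prod (L @ L') r = timed_prod L r \<otimes> timed_prod L' r"
  using assms wprod_append[of "map fst (filter (\<lambda>p. snd p = r) L)" "map fst (filter (\<lambda>p. snd p = r) L')"]
  unfolding timed_prod_def by auto

lemma timed_prod_concat:
  "(\<And>L. L \<in> set Ls \<Longrightarrow> fst ` set L \<subseteq> carrier G)
    \<Longrightarrow> timed_prod (concat Ls) r = wprod G (map (\<lambda>L. timed_prod L r) Ls)"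
proof (induction Ls)
  case Nil
  then show ?case
    unfolding timed_prod_def by simp
next
  case (Cons L Ls)
  then have "fst ` set (concat Ls) \<subseteq> carrier G"
    by fastforce
  then show ?case
    using Cons timed_prod_append[of L "concat Ls"] by simp
qed

lemma timed_prod_single: "a \<in> carrier G \<Longrightarrow> timed_prod [(a, t)] r = (if t = r \<and> 0 \<le> r \<and> r \<le> 1 then a else \<one>)"
  unfolding timed_prod_def by simp

lemma timed_prod_constant_time:
  assumes "set v \<subseteq> carrier G"
  shows "timed_prod (map (\<lambda>a. (a, t)) v) r = timed_prod [(wprod G v, t)] r"
proof -
  have "map fst (filter (\<lambda>p. snd p = r) (map (\<lambda>a. (a, t)) v)) = (if t = r then v else [])"
    by (induction v) auto
  then show ?thesis
    using assms wprod_closed unfolding timed_prod_def by simp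
qed

lemma char_map_eq_timed_prod:
  assumes len: "length xs = k + 2" and xs: "set xs \<subseteq> carrier G"
  shows "char_map G xs s = timed_prod (zip xs (0 # map s [1..<k+1] @ [1]))"
proof
  fix r
  define I where "I = [1..<k+1]"
  define mid where "mid = wprod G (map (\<lambda>i. xs ! i) (filter (\<lambda>i. s i = r) I))"
  have nth: "xs ! i \<in> carrier G" if "i < k + 2" for i
    using xs nth_mem[of i xs] len that by auto
  have I_nth: "xs ! i \<in> carrier G" if "i \<in> set I" for i
    using nth that unfolding I_def by auto
  then have I_closed: "fst ` set (map (\<lambda>i. (xs ! i, s i)) I) \<subseteq> carrier G"
    by auto
  have mid_closed: "mid \<in> carrier G"
    unfolding mid_def using I_nth by (intro wprod_closed) auto
  have "timed_prod (zip xs (0 # map s I @ [1])) r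
      = timed_prod ([(xs ! 0, 0)] @ map (\<lambda>i. (xs ! i, s i)) I @ [(xs ! (k + 1), 1)]) r"
    unfolding I_def zip_padded[OF len] by simp
  also have "\<dots> = timed_prod [(xs ! 0, 0)] r \<otimes>
      (timed_prod (map (\<lambda>i. (xs ! i, s i)) I) r \<otimes> timed_prod [(xs ! (k + 1), 1)] r)"
    using timed_prod_append[of "[(xs ! 0, 0)]" "map (\<lambda>i. (xs ! i, s i)) I @ [(xs ! (k + 1), 1)]"]
      timed_prod_append[of "map (\<lambda>i. (xs ! i, s i)) I" "[(xs ! (k + 1), 1)]"]
      nth[of 0] nth[of "k + 1"] I_closed by simp
  also have "timed_prod (map (\<lambda>i. (xs ! i, s i)) I) r = (if 0 \<le> r \<and> r \<le> 1 then mid else \<one>)"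
    unfolding timed_prod_def mid_def by (simp add: filter_map o_def)
  finally have "timed_prod (zip xs (0 # map s I @ [1])) r
      = (if r = 0 then xs ! 0 \<otimes> mid else if r = 1 then mid \<otimes> xs ! (k + 1)
         else if 0 < r \<and> r < 1 then mid else \<one>)"
    using nth[of 0] nth[of "k + 1"] mid_closed
    by (cases "r < 0 \<or> 1 < r"; cases "r = 0"; cases "r = 1") (auto simp: timed_prod_single)
  moreover have "char_map G xs s r = (if r = 0 then xs ! 0 \<otimes> mid else if r = 1 then mid \<otimes> xs ! (k + 1)
      else if 0 < r \<and> r < 1 then mid else \<one>)"
    unfolding char_map_def Let_def len mid_def I_def by (simp only: add_diff_cancel_right')
  ultimately show "char_map G xs s r = timed_prod (zip xs (0 # map s [1..<k+1] @ [1])) r"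
    unfolding I_def by simp
qed

lemma timed_prod_refine:
  assumes "\<And>i. i \<in> set I \<Longrightarrow> set (v i) \<subseteq> carrier G"
  shows "timed_prod (zip (concat (map v I)) (concat (map (\<lambda>i. replicate (length (v i)) (t i)) I)))
    = timed_prod (map (\<lambda>i. (wprod G (v i), t i)) I)"
proof
  fix r
  have "zip (concat (map v I)) (concat (map (\<lambda>i. replicate (length (v i)) (t i)) I))
      = concat (map (\<lambda>i. map (\<lambda>a. (a, t i)) (v i)) I)"
    by (simp add: zip_concat_map zip_replicate2)
  moreover have "timed_prod (concat (map (\<lambda>i. map (\<lambda>a. (a, t i)) (v i)) I)) r
      = wprod G (map (\<lambda>i. timed_prod (map (\<lambda>a. (a, t i)) (v i)) r) I)"
    by (subst timed_prod_concat) (auto simp: o_def dest!: assms)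
  moreover have "\<dots> = wprod G (map (\<lambda>i. timed_prod [(wprod G (v i), t i)] r) I)"
    by (rule arg_cong[where f = "wprod G"], rule map_cong[OF refl], rule timed_prod_constant_time, rule assms)
  moreover have "\<dots> = timed_prod (concat (map (\<lambda>i. [(wprod G (v i), t i)]) I)) r"
    using assms wprod_closed by (subst timed_prod_concat) (auto simp: o_def)
  moreover have "concat (map (\<lambda>i. [(wprod G (v i), t i)]) I) = map (\<lambda>i. (wprod G (v i), t i)) I"
    by (induction I) auto
  ultimately show "timed_prod (zip (concat (map v I)) (concat (map (\<lambda>i. replicate (length (v i)) (t i)) I))) r
    = timed_prod (map (\<lambda>i. (wprod G (v i), t i)) I) r"
    by simp
qed

lemma timed_prod_graph:
  assumes R: "distinct R" and closed: "\<And>r. r \<in> set R \<Longrightarrow> u r \<in> carrier G"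
    and trivial: "\<And>r. \<not> (r \<in> set R \<and> 0 \<le> r \<and> r \<le> 1) \<Longrightarrow> u r = \<one>"
  shows "timed_prod (zip (map u R) R) = u"
proof
  fix r
  show "timed_prod (zip (map u R) R) r = u r"
  proof (cases "r \<in> set R \<and> 0 \<le> r \<and> r \<le> 1")
    case True
    have "map fst (filter (\<lambda>p. snd p = r) (zip (map u R) R)) = map u (filter (\<lambda>t. t = r) R)"
      by (simp add: zip_map1 zip_same_conv_map filter_map o_def)
    then show ?thesis
      using True closed unfolding timed_prod_def filter_eq_distinct[OF R] by simp
  next
    case False
    then show ?thesis
      using trivial[OF False] unfolding timed_prod_def
      by (auto simp: zip_map1 zip_same_conv_map filter_map o_def filter_eq_distinct[OF R])
  qed
qed

end

section \<open>Maximal chains of [1,g]\<close>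

locale factor_interval = generated_monoid +
  fixes g assumes g_Mon: "g \<in> Mon G X"
begin

abbreviation n where "n \<equiv> wlen G X g"

definition reduced_words :: "'a list set" where
  "reduced_words = {w. geodesic w \<and> wprod G w = g}"

definition prefix_prod :: "'a list \<Rightarrow> nat \<Rightarrow> 'a" where
  "prefix_prod w i = wprod G (take i w)"

definition word_chain :: "'a list \<Rightarrow> 'a set" where
  "word_chain w = prefix_prod w ` {0..n}"

lemma reduced_wordD:
  assumes "w \<in> reduced_words"
  shows "geodesic w" "w \<in> lists X" "length w = n" "wprod G w = g"
  using assms unfolding reduced_words_def geodesic_def by auto

lemma reduced_word_infix: "w \<in> reduced_words \<Longrightarrow> geodesic (drop i (take j w))"
  using geodesic_drop[OF geodesic_take[OF reduced_wordD(1)]] .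

lemma prefix_prod_0 [simp]: "prefix_prod w 0 = \<one>"
  unfolding prefix_prod_def by simp

lemma prefix_prod_n: "w \<in> reduced_words \<Longrightarrow> prefix_prod w n = g"
  unfolding prefix_prod_def using reduced_wordD[of w] by simp

lemma prefix_in_lists: "w \<in> lists X \<Longrightarrow> take i w \<in> lists X"
  by (auto dest: in_set_takeD)

lemma prefix_prod_Mon: "w \<in> reduced_words \<Longrightarrow> prefix_prod w i \<in> Mon G X"
  unfolding prefix_prod_def using reduced_wordD(2) prefix_in_lists Mon_wprod by blast

lemma prefix_prod_closed: "w \<in> reduced_words \<Longrightarrow> prefix_prod w i \<in> carrier G"
  using prefix_prod_Mon Mon_closed by blast

lemma prefix_prod_wlen: "w \<in> reduced_words \<Longrightarrow> i \<le> n \<Longrightarrow> wlen G X (prefix_prod w i) = i"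
  using geodesic_take[OF reduced_wordD(1), of w i] reduced_wordD(3)[of w]
  unfolding prefix_prod_def geodesic_def by simp

lemma prefix_prod_inj: "w \<in> reduced_words \<Longrightarrow> inj_on (prefix_prod w) {0..n}"
  by (rule inj_onI) (auto dest: arg_cong[where f = "wlen G X"] simp: prefix_prod_wlen)

lemma prefix_prod_pleq:
  assumes w: "w \<in> reduced_words" and ij: "i \<le> j" "j \<le> n"
  shows "pleq G X (prefix_prod w i) (prefix_prod w j)"
proof -
  define m where "m = take (j - i) (drop i w)"
  have tj: "take j w = take i w @ m"
    unfolding m_def using ij take_add[of i "j - i" w] by simp
  have "take i w @ m @ drop j w = w"
    using tj append_take_drop_id[of j w] by simp
  then have "geodesic m"
    using geodesic_infix[of "take i w" m "drop j w"] reduced_wordD(1)[OF w] by simp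
  then have m: "m \<in> lists X" "wlen G X (wprod G m) = j - i"
    using ij reduced_wordD(3)[OF w] unfolding geodesic_def m_def by auto
  have "prefix_prod w i \<otimes> wprod G m = prefix_prod w j"
    unfolding prefix_prod_def tj
    using wprod_append lists_gens_carrier[OF prefix_in_lists[OF reduced_wordD(2)[OF w]]]
      lists_gens_carrier[OF m(1)] by simp
  then show ?thesis
    unfolding pleq_def using prefix_prod_Mon[OF w] Mon_wprod[OF m(1)] m(2)
      prefix_prod_wlen[OF w] ij by auto
qed

lemma prefix_prod_pless_iff:
  assumes w: "w \<in> reduced_words" and "i \<le> n" "j \<le> n"
  shows "pless G X (prefix_prod w i) (prefix_prod w j) \<longleftrightarrow> i < j"
proof -
  have "pleq G X (prefix_prod w i) (prefix_prod w j) \<longleftrightarrow> i \<le> j"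
    using assms prefix_prod_pleq[OF w, of i j] pleq_wlen[of "prefix_prod w i" "prefix_prod w j"]
      prefix_prod_wlen[OF w] by auto
  moreover have "prefix_prod w i = prefix_prod w j \<longleftrightarrow> i = j"
    using assms inj_onD[OF prefix_prod_inj[OF w]] by auto
  ultimately show ?thesis
    unfolding pless_def by auto
qed

lemma word_chain_in_max_chains:
  assumes w: "w \<in> reduced_words"
  shows "word_chain w \<in> max_chains G X g"
proof -
  have "pleq G X (prefix_prod w i) g" if "i \<le> n" for i
    using prefix_prod_pleq[OF w that order_refl] prefix_prod_n[OF w] by simp
  then have "word_chain w \<subseteq> interval G X g"
    unfolding word_chain_def interval_def by auto
  moreover have "pleq G X (prefix_prod w i) (prefix_prod w j) \<or> pleq G X (prefix_prod w j) (prefix_prod w i)"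
    if "i \<le> n" "j \<le> n" for i j
    using prefix_prod_pleq[OF w] that nat_le_linear by blast
  then have "is_chain G X (word_chain w)"
    unfolding is_chain_def word_chain_def by auto
  moreover have "D \<subseteq> word_chain w"
    if D: "D \<subseteq> interval G X g" "is_chain G X D" "word_chain w \<subseteq> D" for D
  proof
    fix y assume y: "y \<in> D"
    define j where "j = wlen G X y"
    have jn: "j \<le> n"
      using y D(1) pleq_wlen unfolding j_def interval_def by blast
    then have "prefix_prod w j \<in> D"
      using D(3) unfolding word_chain_def by auto
    then have "pleq G X y (prefix_prod w j) \<or> pleq G X (prefix_prod w j) y"
      using D(2) y unfolding is_chain_def by blast
    then have "y = prefix_prod w j"
      using pleq_wlen_eqD[of y "prefix_prod w j"] pleq_wlen_eqD[of "prefix_prod w j" y]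
        prefix_prod_wlen[OF w jn] unfolding j_def by auto
    then show "y \<in> word_chain w"
      using jn unfolding word_chain_def by auto
  qed
  ultimately show ?thesis
    unfolding max_chains_def by blast
qed

lemma chain_idx_prefix_prod:
  assumes w: "w \<in> reduced_words" and i: "i \<le> n"
  shows "chain_idx G X (word_chain w) (prefix_prod w i) = i"
proof -
  have "{y \<in> word_chain w. pless G X y (prefix_prod w i)} = prefix_prod w ` {0..<i}"
    unfolding word_chain_def using prefix_prod_pless_iff[OF w _ i] i by force
  moreover have "inj_on (prefix_prod w) {0..<i}"
    by (rule inj_on_subset[OF prefix_prod_inj[OF w]]) (use i in auto)
  ultimately show ?thesis
    unfolding chain_idx_def by (simp add: card_image)
qed

lemma max_chainD:
  assumes "C \<in> max_chains G X g"
  shows "C \<subseteq> interval G X g" "is_chain G X C"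
  using assms unfolding max_chains_def by auto

lemma max_chain_absorb:
  assumes C: "C \<in> max_chains G X g" and m: "m \<in> interval G X g"
    and comparable: "\<forall>x\<in>C. pleq G X x m \<or> pleq G X m x"
  shows "m \<in> C"
proof -
  have "m \<in> Mon G X"
    using m pleq_Mon unfolding interval_def by blast
  then have "is_chain G X (insert m C)"
    using max_chainD(2)[OF C] comparable pleq_refl unfolding is_chain_def by blast
  then have "insert m C = C"
    using C m unfolding max_chains_def by blast
  then show ?thesis
    by blast
qed

lemma max_chain_pleq:
  assumes C: "C \<in> max_chains G X g" and "x \<in> C" "y \<in> C" "wlen G X x \<le> wlen G X y"
  shows "pleq G X x y"
proof -
  have "pleq G X x y \<or> pleq G X y x"
    using assms max_chainD(2)[OF C] unfolding is_chain_def by blast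
  then show ?thesis
    using assms(4) pleq_wlen pleq_wlen_eqD[of y x] by force
qed

lemma max_chain_wlen_inj:
  assumes "C \<in> max_chains G X g" "x \<in> C" "y \<in> C" "wlen G X x = wlen G X y"
  shows "x = y"
  using assms max_chain_pleq[OF assms(1-3)] pleq_wlen_eqD by simp

lemma one_in_max_chain:
  assumes C: "C \<in> max_chains G X g"
  shows "\<one> \<in> C"
proof (rule max_chain_absorb[OF C])
  show "\<one> \<in> interval G X g"
    unfolding interval_def using pleq_one[OF g_Mon] by simp
  show "\<forall>x\<in>C. pleq G X x \<one> \<or> pleq G X \<one> x"
    using max_chainD(1)[OF C] pleq_one pleq_Mon unfolding interval_def by blast
qed

lemma top_in_max_chain:
  assumes C: "C \<in> max_chains G X g"
  shows "g \<in> C"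
proof (rule max_chain_absorb[OF C])
  show "g \<in> interval G X g"
    unfolding interval_def using pleq_refl[OF g_Mon] by simp
  show "\<forall>x\<in>C. pleq G X x g \<or> pleq G X g x"
    using max_chainD(1)[OF C] unfolding interval_def by blast
qed

lemma max_chain_rank_le: "C \<in> max_chains G X g \<Longrightarrow> x \<in> C \<Longrightarrow> wlen G X x \<le> n"
  using max_chainD(1) pleq_wlen unfolding interval_def by blast

lemma max_chain_absorb_between:
  assumes C: "C \<in> max_chains G X g" and y: "y \<in> C" and z: "z \<in> C"
    and m: "pleq G X y m" "pleq G X m z"
    and outside: "\<forall>x\<in>C. wlen G X x \<le> wlen G X y \<or> wlen G X z \<le> wlen G X x"
  shows "m \<in> C"
proof (rule max_chain_absorb[OF C])
  show "m \<in> interval G X g"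
    using pleq_trans[OF m(2)] z max_chainD(1)[OF C] unfolding interval_def by blast
  show "\<forall>x\<in>C. pleq G X x m \<or> pleq G X m x"
    using outside pleq_trans[OF max_chain_pleq[OF C _ y] m(1)]
      pleq_trans[OF m(2) max_chain_pleq[OF C z]] by blast
qed

text \<open>If rank j were missing from C, an element of rank j interpolated between the
  neighbouring ranks present in C would be comparable with all of C.\<close>

lemma max_chain_has_rank:
  assumes C: "C \<in> max_chains G X g" and j: "j \<le> n"
  shows "\<exists>x\<in>C. wlen G X x = j"
proof (rule ccontr)
  assume missing: "\<not> (\<exists>x\<in>C. wlen G X x = j)"
  define below above where "below = {k. k < j \<and> (\<exists>x\<in>C. wlen G X x = k)}"
    and "above = {k. j < k \<and> k \<le> n \<and> (\<exists>x\<in>C. wlen G X x = k)}"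
  have "j \<noteq> 0"
    using missing one_in_max_chain[OF C] by force
  then have "0 \<in> below"
    using one_in_max_chain[OF C] unfolding below_def by force
  moreover have "n \<in> above"
    using missing top_in_max_chain[OF C] j unfolding above_def by (auto simp: order.order_iff_strict)
  moreover have fin: "finite below" "finite above"
    unfolding below_def above_def by auto
  ultimately have "Max below \<in> below" "Min above \<in> above"
    using Max_in Min_in by blast+
  then obtain y z where y: "y \<in> C" "wlen G X y = Max below"
    and z: "z \<in> C" "wlen G X z = Min above" and jyz: "wlen G X y < j" "j < wlen G X z"
    unfolding below_def above_def by auto
  have "\<forall>x\<in>C. wlen G X x \<le> wlen G X y \<or> wlen G X z \<le> wlen G X x"
  proof
    fix x assume x: "x \<in> C"
    then have "wlen G X x \<in> below \<or> wlen G X x \<in> above"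
      using missing max_chain_rank_le[OF C x] unfolding below_def above_def by (auto simp: nat_neq_iff)
    then show "wlen G X x \<le> wlen G X y \<or> wlen G X z \<le> wlen G X x"
      using Max_ge[OF fin(1)] Min_le[OF fin(2)] y(2) z(2) by auto
  qed
  moreover obtain m where m: "pleq G X y m" "pleq G X m z" "wlen G X m = j"
    using pleq_interpolate[OF max_chain_pleq[OF C y(1) z(1)], of j] jyz by auto
  ultimately have "m \<in> C"
    using max_chain_absorb_between[OF C y(1) z(1)] by blast
  then show False
    using missing m(3) by blast
qed

lemma max_chain_enumeration:
  assumes C: "C \<in> max_chains G X g"
  obtains c where "\<And>j. j \<le> n \<Longrightarrow> c j \<in> C \<and> wlen G X (c j) = j" and "C = c ` {0..n}"
proof -
  define c where "c j = (THE x. x \<in> C \<and> wlen G X x = j)" for j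
  have c: "c j \<in> C \<and> wlen G X (c j) = j" if j: "j \<le> n" for j
  proof -
    have "\<exists>!x. x \<in> C \<and> wlen G X x = j"
      using max_chain_has_rank[OF C j] max_chain_wlen_inj[OF C] by blast
    then show ?thesis
      unfolding c_def by (rule theI')
  qed
  have "x \<in> c ` {0..n}" if x: "x \<in> C" for x
  proof
    show "x = c (wlen G X x)"
      using c[OF max_chain_rank_le[OF C x]] max_chain_wlen_inj[OF C x] by simp
  qed (use max_chain_rank_le[OF C x] in simp)
  then have "C = c ` {0..n}"
    using c by auto
  with c show thesis
    using that by blast
qed

lemma max_chain_word_chain:
  assumes C: "C \<in> max_chains G X g"
  shows "\<exists>w\<in>reduced_words. C = word_chain w"
proof -
  obtain c where c: "\<And>j. j \<le> n \<Longrightarrow> c j \<in> C \<and> wlen G X (c j) = j" and C_eq: "C = c ` {0..n}"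
    using max_chain_enumeration[OF C] by blast
  define w where "w = map (\<lambda>j. inv (c j) \<otimes> c (Suc j)) [0..<n]"
  have letters: "w \<in> lists X"
    unfolding w_def using c pleq_step_letter max_chain_pleq[OF C] by auto
  have prefix: "wprod G (take j w) = c j" if "j \<le> n" for j
    using that
  proof (induction j)
    case 0
    have "c 0 = \<one>"
      using c[of 0] max_chain_wlen_inj[OF C _ one_in_max_chain[OF C]] by simp
    then show ?case
      by simp
  next
    case (Suc j)
    have "take (Suc j) w = take j w @ [inv (c j) \<otimes> c (Suc j)]"
      unfolding w_def using Suc.prems by (simp add: take_Suc_conv_app_nth)
    moreover have "c j \<in> carrier G" "c (Suc j) \<in> carrier G"
      using c[of j] c[of "Suc j"] Suc.prems max_chainD(1)[OF C] pleq_Mon Mon_closed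
      unfolding interval_def by auto
    moreover have "set (take j w) \<subseteq> carrier G"
      using lists_gens_carrier[OF prefix_in_lists[OF letters]] .
    ultimately show ?case
      using Suc wprod_append[of "take j w" "[inv (c j) \<otimes> c (Suc j)]"]
      by (simp add: m_assoc[symmetric])
  qed
  have "wprod G w = g"
    using prefix[of n] c[of n] max_chain_wlen_inj[OF C _ top_in_max_chain[OF C]] w_def by simp
  then have "w \<in> reduced_words"
    unfolding reduced_words_def geodesic_def using letters w_def by simp
  moreover have "C = word_chain w"
    unfolding C_eq word_chain_def prefix_prod_def using prefix by auto
  ultimately show ?thesis
    by blast
qed

lemma max_chains_eq: "max_chains G X g = word_chain ` reduced_words"
  using max_chain_word_chain word_chain_in_max_chains by blast

section \<open>Points of the order complex\<close>

definition orthoscheme :: "real list set" where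
  "orthoscheme = {ts. length ts = n \<and> sorted ts \<and> set ts \<subseteq> {0..1}}"

text \<open>We write t_i for tcoord ts i, so t_1, ..., t_n are the entries of ts, t_0 = 0 and
  t_(n+1) = 1.\<close>

definition tcoord :: "real list \<Rightarrow> nat \<Rightarrow> real" where
  "tcoord ts i = (if i = 0 then 0 else if i \<le> n then ts ! (i - 1) else 1)"

definition jumps :: "real list \<Rightarrow> nat set" where
  "jumps ts = {i. i \<le> n \<and> tcoord ts i < tcoord ts (Suc i)}"

text \<open>The vertex x_i of the chain of w gets weight t_(i+1) - t_i, so the orthoscheme
  coordinates of this point are y_j = 1 - t_(n+1-j).\<close>

definition bary :: "'a list \<Rightarrow> real list \<Rightarrow> 'a \<Rightarrow> real" where
  "bary w ts x = (\<Sum>i | i \<le> n \<and> prefix_prod w i = x. tcoord ts (Suc i) - tcoord ts i)"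

lemma orthoscheme_length: "ts \<in> orthoscheme \<Longrightarrow> length ts = n"
  unfolding orthoscheme_def by simp

lemma orthoscheme_sorted: "ts \<in> orthoscheme \<Longrightarrow> sorted ts"
  unfolding orthoscheme_def by simp

lemma orthoscheme_range: "ts \<in> orthoscheme \<Longrightarrow> t \<in> set ts \<Longrightarrow> 0 \<le> t \<and> t \<le> 1"
  unfolding orthoscheme_def by auto

lemma tcoord_0 [simp]: "tcoord ts 0 = 0"
  unfolding tcoord_def by simp

lemma tcoord_Suc_n [simp]: "tcoord ts (Suc n) = 1"
  unfolding tcoord_def by simp

lemma tcoord_nth: "0 < i \<Longrightarrow> i \<le> n \<Longrightarrow> tcoord ts i = ts ! (i - 1)"
  unfolding tcoord_def by simp

lemma tcoord_range:
  assumes "ts \<in> orthoscheme"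
  shows "0 \<le> tcoord ts i" "tcoord ts i \<le> 1"
  using orthoscheme_range[OF assms, of "ts ! (i - 1)"] orthoscheme_length[OF assms]
  unfolding tcoord_def by auto

lemma tcoord_mono:
  assumes ts: "ts \<in> orthoscheme" and "i \<le> j"
  shows "tcoord ts i \<le> tcoord ts j"
proof (cases "i = 0")
  case True
  then show ?thesis
    using tcoord_range(1)[OF ts, of j] by simp
next
  case i0: False
  show ?thesis
  proof (cases "n < j")
    case True
    then have "tcoord ts j = 1"
      unfolding tcoord_def by simp
    then show ?thesis
      using tcoord_range(2)[OF ts, of i] by simp
  next
    case False
    then show ?thesis
      using sorted_nth_mono[OF orthoscheme_sorted[OF ts], of "i - 1" "j - 1"]
        orthoscheme_length[OF ts] assms(2) i0 unfolding tcoord_def by auto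
  qed
qed

lemma finite_word_chain: "finite (word_chain w)"
  unfolding word_chain_def by simp

lemma sum_word_chain:
  "w \<in> reduced_words \<Longrightarrow> sum f (word_chain w) = (\<Sum>i\<in>{0..n}. f (prefix_prod w i))"
  unfolding word_chain_def using sum.reindex[OF prefix_prod_inj] by simp

lemma bary_prefix_prod:
  assumes w: "w \<in> reduced_words" and i: "i \<le> n"
  shows "bary w ts (prefix_prod w i) = tcoord ts (Suc i) - tcoord ts i"
proof -
  have "{k. k \<le> n \<and> prefix_prod w k = prefix_prod w i} = {i}"
    using inj_onD[OF prefix_prod_inj[OF w]] i by auto
  then show ?thesis
    unfolding bary_def by simp
qed

lemma bary_outside:
  assumes "x \<notin> word_chain w"
  shows "bary w ts x = 0"
proof -
  have "{i. i \<le> n \<and> prefix_prod w i = x} = {}"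
    using assms unfolding word_chain_def by auto
  then show ?thesis
    unfolding bary_def by (simp only: sum.empty)
qed

lemma bary_nonneg: "ts \<in> orthoscheme \<Longrightarrow> 0 \<le> bary w ts x"
  unfolding bary_def using tcoord_mono by (intro sum_nonneg) auto

lemma bary_in_osimplex:
  assumes w: "w \<in> reduced_words" and ts: "ts \<in> orthoscheme"
  shows "bary w ts \<in> osimplex (word_chain w)"
proof -
  have "sum (bary w ts) (word_chain w) = (\<Sum>i\<in>{0..n}. bary w ts (prefix_prod w i))"
    by (rule sum_word_chain[OF w])
  also have "\<dots> = (\<Sum>i\<in>{0..n}. tcoord ts (Suc i) - tcoord ts i)"
    by (rule sum.cong) (auto simp: bary_prefix_prod[OF w])
  also have "\<dots> = 1"
    using sum_Suc_diff[of 0 n "tcoord ts"] by simp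
  finally show ?thesis
    unfolding osimplex_def using bary_nonneg[OF ts] bary_outside by blast
qed

lemma partial_sums_orthoscheme:
  assumes mono: "\<And>i j. i \<le> j \<Longrightarrow> S i \<le> S j" and S_0: "S 0 = 0" and S_n: "S (Suc n) = 1"
  shows "map (\<lambda>i. S (Suc i)) [0..<n] \<in> orthoscheme"
    and "i \<le> Suc n \<Longrightarrow> tcoord (map (\<lambda>i. S (Suc i)) [0..<n]) i = S i"
proof -
  have "S 0 \<le> S (Suc i)" "S (Suc i) \<le> S (Suc n)" if "i < n" for i
    using mono that by auto
  then show "map (\<lambda>i. S (Suc i)) [0..<n] \<in> orthoscheme"
    unfolding orthoscheme_def sorted_iff_nth_mono using mono S_0 S_n by auto
next
  assume i: "i \<le> Suc n"
  consider "i = 0" | "0 < i" "i \<le> n" | "i = Suc n"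
    using i by linarith
  then show "tcoord (map (\<lambda>i. S (Suc i)) [0..<n]) i = S i"
  proof cases
    case 2
    then have "[0..<n] ! (i - 1) = i - 1"
      by simp
    then show ?thesis
      using 2 unfolding tcoord_def by simp
  qed (use S_0 S_n in simp_all)
qed

text \<open>The times are the partial sums of the barycentric coordinates along the chain.\<close>

lemma osimplex_bary:
  assumes w: "w \<in> reduced_words" and lam: "lam \<in> osimplex (word_chain w)"
  shows "\<exists>ts\<in>orthoscheme. lam = bary w ts"
proof -
  have nonneg: "\<And>x. 0 \<le> lam x" and outside: "\<And>x. x \<notin> word_chain w \<Longrightarrow> lam x = 0"
    and total: "sum lam (word_chain w) = 1"
    using lam unfolding osimplex_def by auto
  define S where "S i = (\<Sum>j<i. lam (prefix_prod w j))" for i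
  have mono: "S i \<le> S j" if "i \<le> j" for i j
    unfolding S_def using nonneg that by (intro sum_mono2) auto
  have S_n: "S (Suc n) = 1"
    using total sum_word_chain[OF w, of lam] unfolding S_def
    by (simp add: atLeast0AtMost lessThan_Suc_atMost)
  have S_0: "S 0 = 0"
    unfolding S_def by simp
  have "lam x = bary w (map (\<lambda>i. S (Suc i)) [0..<n]) x" for x
  proof (cases "x \<in> word_chain w")
    case True
    then obtain i where "i \<le> n" "x = prefix_prod w i"
      unfolding word_chain_def by auto
    then show ?thesis
      using bary_prefix_prod[OF w] partial_sums_orthoscheme(2)[OF mono S_0 S_n] unfolding S_def by simp
  qed (simp add: outside bary_outside)
  then show ?thesis
    using partial_sums_orthoscheme(1)[OF mono S_0 S_n] by blast
qed

lemma osimplex_word_chain: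
  "w \<in> reduced_words \<Longrightarrow> osimplex (word_chain w) = bary w ` orthoscheme"
  using osimplex_bary bary_in_osimplex by blast

lemma O_points_eq: "O_points G X g = {bary w ts | w ts. w \<in> reduced_words \<and> ts \<in> orthoscheme}"
  unfolding O_points_def max_chains_eq using osimplex_word_chain by auto

lemma ortho_coord_bary:
  assumes w: "w \<in> reduced_words" and j: "1 \<le> j" "j \<le> n"
  shows "ortho_coord G X n (word_chain w) (bary w ts) j = 1 - ts ! (n - j)"
proof -
  have "ortho_coord G X n (word_chain w) (bary w ts) j
      = (\<Sum>x\<in>word_chain w. if n + 1 - j \<le> chain_idx G X (word_chain w) x then bary w ts x else 0)"
    unfolding ortho_coord_def word_chain_def by (simp add: sum.inter_filter)
  also have "\<dots> = (\<Sum>i\<in>{0..n}. if n + 1 - j \<le> i then tcoord ts (Suc i) - tcoord ts i else 0)"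
    unfolding sum_word_chain[OF w]
    by (rule sum.cong) (auto simp: chain_idx_prefix_prod[OF w] bary_prefix_prod[OF w])
  also have "\<dots> = (\<Sum>i\<in>{n + 1 - j..n}. tcoord ts (Suc i) - tcoord ts i)"
    by (rule sum.mono_neutral_cong_right) auto
  also have "\<dots> = 1 - tcoord ts (n + 1 - j)"
    using sum_Suc_diff[of "n + 1 - j" n "tcoord ts"] j by simp
  finally show ?thesis
    using j by (simp add: tcoord_nth)
qed

lemma O_cell_dist_bary:
  assumes w: "w \<in> reduced_words"
  shows "O_cell_dist G X g (word_chain w) (bary w ts) (bary w ts') = eucl_list_dist n ts ts'"
proof -
  have "(\<Sum>j\<in>{1..n}. (ortho_coord G X n (word_chain w) (bary w ts) j
          - ortho_coord G X n (word_chain w) (bary w ts') j)\<^sup>2)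
      = (\<Sum>j\<in>{1..n}. (ts ! (n - j) - ts' ! (n - j))\<^sup>2)"
    by (rule sum.cong) (auto simp: ortho_coord_bary[OF w] power2_commute)
  also have "\<dots> = (\<Sum>i<n. (ts ! i - ts' ! i)\<^sup>2)"
    by (rule sum.reindex_bij_witness[of _ "\<lambda>i. n - i" "\<lambda>j. n - j"]) auto
  finally show ?thesis
    unfolding O_cell_dist_def eucl_list_dist_def by simp
qed

lemma bary_sum_rank_less:
  assumes w: "w \<in> reduced_words" and i: "i \<le> Suc n" and U: "finite U" "word_chain w \<subseteq> U"
  shows "(\<Sum>x | x \<in> U \<and> wlen G X x < i. bary w ts x) = tcoord ts i"
proof -
  have "(\<Sum>x | x \<in> U \<and> wlen G X x < i. bary w ts x)
      = (\<Sum>x\<in>U. if wlen G X x < i then bary w ts x else 0)"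
    using U(1) by (simp add: sum.inter_filter)
  also have "\<dots> = (\<Sum>x\<in>word_chain w. if wlen G X x < i then bary w ts x else 0)"
    using U bary_outside by (intro sum.mono_neutral_right) auto
  also have "\<dots> = (\<Sum>k\<in>{0..n}. if k < i then tcoord ts (Suc k) - tcoord ts k else 0)"
    unfolding sum_word_chain[OF w]
    by (rule sum.cong) (auto simp: prefix_prod_wlen[OF w] bary_prefix_prod[OF w])
  also have "\<dots> = (\<Sum>k<i. tcoord ts (Suc k) - tcoord ts k)"
    using i by (intro sum.mono_neutral_cong_right) auto
  also have "\<dots> = tcoord ts i"
    by (simp add: sum_lessThan_telescope)
  finally show ?thesis .
qed

lemma bary_eq_times:
  assumes w: "w \<in> reduced_words" "w' \<in> reduced_words" and ts: "ts \<in> orthoscheme" "ts' \<in> orthoscheme"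
    and eq: "bary w ts = bary w' ts'"
  shows "ts = ts'"
proof (rule nth_equalityI)
  show "length ts = length ts'"
    using ts orthoscheme_length by simp
  fix k assume "k < length ts"
  then have k: "Suc k \<le> n"
    using orthoscheme_length[OF ts(1)] by simp
  have U: "finite (word_chain w \<union> word_chain w')"
    using finite_word_chain by simp
  have "tcoord ts (Suc k) = tcoord ts' (Suc k)"
    using bary_sum_rank_less[OF w(1) _ U, of "Suc k" ts] bary_sum_rank_less[OF w(2) _ U, of "Suc k" ts']
      eq k by simp
  then show "ts ! k = ts' ! k"
    using k by (simp add: tcoord_nth)
qed

lemma bary_eq_jumps:
  assumes w: "w \<in> reduced_words" "w' \<in> reduced_words"
    and eq: "bary w ts = bary w' ts" and i: "i \<in> jumps ts"
  shows "prefix_prod w i = prefix_prod w' i"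
proof -
  have i_n: "i \<le> n"
    using i unfolding jumps_def by simp
  have "bary w' ts (prefix_prod w i) \<noteq> 0"
    using bary_prefix_prod[OF w(1) i_n, of ts] i eq unfolding jumps_def by simp
  then have "prefix_prod w i \<in> word_chain w'"
    using bary_outside by blast
  then obtain k where k: "k \<le> n" "prefix_prod w i = prefix_prod w' k"
    unfolding word_chain_def by auto
  then have "k = i"
    using prefix_prod_wlen[OF w(1) i_n] prefix_prod_wlen[OF w(2) k(1)] by simp
  then show ?thesis
    using k by simp
qed

lemma bary_eq_sum_jumps:
  assumes ts: "ts \<in> orthoscheme"
  shows "bary w ts x = (\<Sum>i | i \<in> jumps ts \<and> prefix_prod w i = x. tcoord ts (Suc i) - tcoord ts i)"
proof -
  have "tcoord ts (Suc i) - tcoord ts i = 0" if "i \<le> n" "i \<notin> jumps ts" for i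
    using tcoord_mono[OF ts, of i "Suc i"] that unfolding jumps_def by auto
  then show ?thesis
    unfolding bary_def by (intro sum.mono_neutral_right) (auto simp: jumps_def)
qed

lemma bary_eq_iff:
  assumes w: "w \<in> reduced_words" "w' \<in> reduced_words" and ts: "ts \<in> orthoscheme" "ts' \<in> orthoscheme"
  shows "bary w ts = bary w' ts' \<longleftrightarrow> ts = ts' \<and> (\<forall>i\<in>jumps ts. prefix_prod w i = prefix_prod w' i)"
proof
  assume eq: "bary w ts = bary w' ts'"
  then have "ts = ts'"
    using bary_eq_times[OF w ts] by blast
  with eq show "ts = ts' \<and> (\<forall>i\<in>jumps ts. prefix_prod w i = prefix_prod w' i)"
    using bary_eq_jumps[OF w] by blast
next
  assume agree: "ts = ts' \<and> (\<forall>i\<in>jumps ts. prefix_prod w i = prefix_prod w' i)"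
  show "bary w ts = bary w' ts'"
  proof
    fix x
    have "{i. i \<in> jumps ts \<and> prefix_prod w i = x} = {i. i \<in> jumps ts \<and> prefix_prod w' i = x}"
      using agree by auto
    then have "bary w ts x = bary w' ts x"
      by (simp only: bary_eq_sum_jumps[OF ts(1)])
    then show "bary w ts x = bary w' ts' x"
      using agree by simp
  qed
qed

section \<open>Weighted factorizations of g\<close>

definition wfact :: "'a list \<Rightarrow> real list \<Rightarrow> real \<Rightarrow> 'a" where
  "wfact w ts = timed_prod (zip w ts)"

lemma wfact_outside: "\<not> (0 \<le> r \<and> r \<le> 1) \<Longrightarrow> wfact w ts r = \<one>"
  unfolding wfact_def by (rule timed_prod_outside)

lemma wfact_block:
  assumes w: "w \<in> reduced_words" and ts: "ts \<in> orthoscheme" and r: "0 \<le> r" "r \<le> 1"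
  shows "wfact w ts r = wprod G (drop (count_below ts r) (take (count_upto ts r) w))"
proof -
  define L where "L = zip w ts"
  have len: "length w = length ts"
    using reduced_wordD(3)[OF w] orthoscheme_length[OF ts] by simp
  then have L: "map fst L = w" "map snd L = ts"
    unfolding L_def by auto
  define A B C where "A = filter (\<lambda>p. snd p < r) L" and "B = filter (\<lambda>p. snd p = r) L"
    and "C = filter (\<lambda>p. r < snd p) L"
  have split: "L = A @ B @ C"
    unfolding A_def B_def C_def using sorted_split_at[of snd L r] orthoscheme_sorted[OF ts] L(2) by simp
  have "length A = count_below ts r"
    unfolding A_def count_below_def L(2)[symmetric] filter_map by (simp add: o_def)
  moreover have "length B = count_list ts r"
    unfolding B_def count_list_eq_length_filter L(2)[symmetric] filter_map
    by (simp add: o_def eq_commute)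
  ultimately have "drop (count_below ts r) (take (count_upto ts r) L) = B"
    unfolding count_upto_eq by (subst split) simp
  then have "filter (\<lambda>p. snd p = r) L = drop (count_below ts r) (take (count_upto ts r) L)"
    unfolding B_def by simp
  then show ?thesis
    unfolding wfact_def timed_prod_def L_def[symmetric] using r
    by (simp add: drop_map[symmetric] take_map[symmetric] L(1))
qed

lemma wfact_Mon:
  assumes w: "w \<in> reduced_words" and ts: "ts \<in> orthoscheme"
  shows "wfact w ts r \<in> Mon G X"
proof (cases "0 \<le> r \<and> r \<le> 1")
  case True
  then show ?thesis
    using wfact_block[OF w ts] reduced_word_infix[OF w] Mon_wprod unfolding geodesic_def by simp
qed (simp add: wfact_outside one_Mon)

lemma wfact_wlen:
  assumes w: "w \<in> reduced_words" and ts: "ts \<in> orthoscheme"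
  shows "wlen G X (wfact w ts r) = count_list ts r"
proof (cases "0 \<le> r \<and> r \<le> 1")
  case True
  have "count_upto ts r \<le> n"
    using count_upto_le_length orthoscheme_length[OF ts] by metis
  then show ?thesis
    using wfact_block[OF w ts] reduced_word_infix[OF w] True reduced_wordD(3)[OF w]
    unfolding geodesic_def by (simp add: count_upto_eq)
next
  case False
  then have "r \<notin> set ts"
    using orthoscheme_range[OF ts] by auto
  then show ?thesis
    using False by (simp add: wfact_outside count_list_0_iff)
qed

lemma wfact_eq_one_iff:
  assumes w: "w \<in> reduced_words" and ts: "ts \<in> orthoscheme"
  shows "wfact w ts r = \<one> \<longleftrightarrow> r \<notin> set ts"
proof
  assume "wfact w ts r = \<one>"
  then show "r \<notin> set ts"
    using wfact_wlen[OF w ts, of r] by (simp add: count_list_0_iff)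
next
  assume "r \<notin> set ts"
  then show "wfact w ts r = \<one>"
    using wfact_wlen[OF w ts, of r] wlen_eq_0D[OF wfact_Mon[OF w ts]] by (simp add: count_list_0_iff)
qed

lemma prefix_prod_count_upto:
  assumes w: "w \<in> reduced_words" and ts: "ts \<in> orthoscheme" and r: "0 \<le> r" "r \<le> 1"
  shows "prefix_prod w (count_upto ts r) = prefix_prod w (count_below ts r) \<otimes> wfact w ts r"
proof -
  have split: "take (count_upto ts r) w
      = take (count_below ts r) w @ drop (count_below ts r) (take (count_upto ts r) w)"
    by (metis count_upto_eq le_add1 append_take_drop_id take_take min.absorb1)
  have "set (take (count_upto ts r) w) \<subseteq> carrier G"
    using lists_gens_carrier[OF prefix_in_lists[OF reduced_wordD(2)[OF w]]] .
  then have "set (take (count_below ts r) w) \<subseteq> carrier G"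
    "set (drop (count_below ts r) (take (count_upto ts r) w)) \<subseteq> carrier G"
    by (subst (asm) split; simp)+
  then show ?thesis
    unfolding prefix_prod_def wfact_block[OF w ts r] by (subst split) (rule wprod_append)
qed

lemma wfact_eq_inv_prefix:
  assumes w: "w \<in> reduced_words" and ts: "ts \<in> orthoscheme" and r: "0 \<le> r" "r \<le> 1"
  shows "wfact w ts r = inv (prefix_prod w (count_below ts r)) \<otimes> prefix_prod w (count_upto ts r)"
  using prefix_prod_count_upto[OF assms] prefix_prod_closed[OF w] Mon_closed[OF wfact_Mon[OF w ts]]
  by (simp add: inv_solve_left)

lemma Lmap_wfact:
  assumes w: "w \<in> reduced_words" and ts: "ts \<in> orthoscheme"
  shows "Lmap G X (wfact w ts) = count_list ts"
proof
  fix r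
  show "Lmap G X (wfact w ts) r = count_list ts r"
  proof (cases "0 \<le> r \<and> r \<le> 1")
    case False
    then have "r \<notin> set ts"
      using orthoscheme_range[OF ts] by auto
    then show ?thesis
      unfolding Lmap_def using False by (auto simp: count_list_0_iff)
  qed (simp add: Lmap_def wfact_wlen[OF w ts])
qed

lemma W_cell_dist_wfact:
  assumes "w \<in> reduced_words" "w' \<in> reduced_words" "ts \<in> orthoscheme" "ts' \<in> orthoscheme"
  shows "W_cell_dist G X g xs (wfact w ts) (wfact w' ts') = eucl_list_dist n ts ts'"
  unfolding W_cell_dist_def Lmap_wfact[OF assms(1,3)] Lmap_wfact[OF assms(2,4)]
  using ortho_point_count_list assms(3,4) unfolding orthoscheme_def by simp

lemma wfact_eq_times:
  assumes w: "w \<in> reduced_words" "w' \<in> reduced_words" and ts: "ts \<in> orthoscheme" "ts' \<in> orthoscheme"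
    and eq: "wfact w ts = wfact w' ts'"
  shows "ts = ts'"
proof -
  have "mset ts = mset ts'"
    using Lmap_wfact[OF w(1) ts(1)] Lmap_wfact[OF w(2) ts(2)] eq
    by (simp add: multiset_eq_iff count_mset)
  then show ?thesis
    using properties_for_sort sorted_sort_id orthoscheme_sorted ts by metis
qed

lemma count_below_jump:
  assumes ts: "ts \<in> orthoscheme" and r: "r \<le> 1" and nonzero: "count_below ts r \<noteq> 0"
  shows "count_below ts r \<in> jumps ts"
proof -
  define p where "p = count_below ts r"
  have p: "0 < p" "p \<le> n"
    using nonzero orthoscheme_length[OF ts] length_filter_le[of "\<lambda>t. t < r" ts]
    unfolding p_def count_below_def by auto
  have "tcoord ts p < r"
    using sorted_nth_less_iff[OF orthoscheme_sorted[OF ts], of "p - 1" r] p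
      orthoscheme_length[OF ts] unfolding p_def by (simp add: tcoord_nth)
  moreover have "r \<le> tcoord ts (Suc p)"
  proof (cases "p = n")
    case False
    then show ?thesis
      using sorted_nth_less_iff[OF orthoscheme_sorted[OF ts], of p r] p
        orthoscheme_length[OF ts] unfolding p_def by (simp add: tcoord_nth)
  qed (use r in simp)
  ultimately show ?thesis
    using p unfolding jumps_def p_def by simp
qed

lemma count_upto_jump:
  assumes ts: "ts \<in> orthoscheme" and r: "0 \<le> r" and not_all: "count_upto ts r \<noteq> n"
  shows "count_upto ts r \<in> jumps ts"
proof -
  define q where "q = count_upto ts r"
  have q: "q < n"
    using not_all count_upto_le_length[of ts r] orthoscheme_length[OF ts]
    unfolding q_def by simp
  have "tcoord ts q \<le> r"
  proof (cases "q = 0")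
    case False
    then show ?thesis
      using sorted_nth_le_iff[OF orthoscheme_sorted[OF ts], of "q - 1" r] q
        orthoscheme_length[OF ts] unfolding q_def by (simp add: tcoord_nth)
  qed (use r in simp)
  moreover have "r < tcoord ts (Suc q)"
    using sorted_nth_le_iff[OF orthoscheme_sorted[OF ts], of q r] q
      orthoscheme_length[OF ts] unfolding q_def by (simp add: tcoord_nth)
  ultimately show ?thesis
    using q unfolding jumps_def q_def by simp
qed

lemma count_at_jump:
  assumes ts: "ts \<in> orthoscheme" and i: "i \<in> jumps ts" "0 < i" "i < n"
  shows "count_upto ts (tcoord ts i) = i" "count_below ts (tcoord ts i) < i"
    "0 \<le> tcoord ts i" "tcoord ts i \<le> 1"
proof -
  define r where "r = ts ! (i - 1)"
  have len: "length ts = n"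
    using orthoscheme_length[OF ts] .
  have prev: "i - 1 < length ts"
    using i len by simp
  have r: "tcoord ts i = r"
    unfolding r_def using i by (simp add: tcoord_nth)
  have "r < ts ! i"
    using i r unfolding jumps_def by (simp add: tcoord_nth)
  then have "\<not> i < count_upto ts r"
    using sorted_nth_le_iff[OF orthoscheme_sorted[OF ts], of i r] i len by simp
  moreover have "i - 1 < count_upto ts r"
    using sorted_nth_le_iff[OF orthoscheme_sorted[OF ts] prev, of r] unfolding r_def by simp
  ultimately show "count_upto ts (tcoord ts i) = i"
    unfolding r by linarith
  have "\<not> i - 1 < count_below ts r"
    using sorted_nth_less_iff[OF orthoscheme_sorted[OF ts] prev, of r] unfolding r_def by simp
  then show "count_below ts (tcoord ts i) < i"
    unfolding r using i by linarith
  show "0 \<le> tcoord ts i" "tcoord ts i \<le> 1"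
    using tcoord_range[OF ts] by auto
qed

text \<open>At a jump i < n the time r = t_i is the last one up to i, so the prefix of length i
  is the prefix ending before r times the value of the weighted factorization at r.\<close>

lemma wfact_eq_jumps:
  assumes w: "w \<in> reduced_words" "w' \<in> reduced_words" and ts: "ts \<in> orthoscheme"
    and eq: "wfact w ts = wfact w' ts"
  shows "i \<in> jumps ts \<Longrightarrow> prefix_prod w i = prefix_prod w' i"
proof (induction i rule: less_induct)
  case (less i)
  have "i \<le> n"
    using less.prems unfolding jumps_def by simp
  then consider "i = 0" | "i = n" | "0 < i" "i < n"
    by (auto simp: le_less)
  then show ?case
  proof cases
    case 2
    then show ?thesis
      using prefix_prod_n w by simp
  next
    case 3
    define r where "r = tcoord ts i"
    note counts = count_at_jump[OF ts less.prems 3, folded r_def]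
    have "prefix_prod w (count_below ts r) = prefix_prod w' (count_below ts r)"
      using count_below_jump[OF ts counts(4)] less.IH[OF counts(2)]
      by (cases "count_below ts r = 0") auto
    then show ?thesis
      using prefix_prod_count_upto[OF w(1) ts counts(3,4)] prefix_prod_count_upto[OF w(2) ts counts(3,4)]
        eq counts(1) by simp
  qed simp
qed

lemma wfact_eq_iff:
  assumes w: "w \<in> reduced_words" "w' \<in> reduced_words" and ts: "ts \<in> orthoscheme" "ts' \<in> orthoscheme"
  shows "wfact w ts = wfact w' ts' \<longleftrightarrow> ts = ts' \<and> (\<forall>i\<in>jumps ts. prefix_prod w i = prefix_prod w' i)"
proof
  assume eq: "wfact w ts = wfact w' ts'"
  then have "ts = ts'"
    using wfact_eq_times[OF w ts] by blast
  with eq show "ts = ts' \<and> (\<forall>i\<in>jumps ts. prefix_prod w i = prefix_prod w' i)"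
    using wfact_eq_jumps[OF w ts(1)] by blast
next
  assume agree: "ts = ts' \<and> (\<forall>i\<in>jumps ts. prefix_prod w i = prefix_prod w' i)"
  show "wfact w ts = wfact w' ts'"
  proof
    fix r
    show "wfact w ts r = wfact w' ts' r"
    proof (cases "0 \<le> r \<and> r \<le> 1")
      case True
      have "prefix_prod w (count_below ts r) = prefix_prod w' (count_below ts r)"
        using count_below_jump[OF ts(1)] True agree
        by (cases "count_below ts r = 0") auto
      moreover have "prefix_prod w (count_upto ts r) = prefix_prod w' (count_upto ts r)"
        using count_upto_jump[OF ts(1)] True agree prefix_prod_n w
        by (cases "count_upto ts r = n") auto
      ultimately show ?thesis
        using wfact_eq_inv_prefix[OF w(1) ts(1)] wfact_eq_inv_prefix[OF w(2) ts(1)] agree True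
        by simp
    qed (simp add: wfact_outside)
  qed
qed

lemma reduced_word_letter:
  assumes w: "w \<in> reduced_words" and a: "a \<in> set w"
  shows "a \<in> X" "wlen G X a = 1"
proof -
  obtain i where i: "i < length w" "w ! i = a"
    using a by (auto simp: in_set_conv_nth)
  have "take i w @ [a] @ drop (Suc i) w = w"
    using id_take_nth_drop[OF i(1)] i(2) by simp
  then have "geodesic [a]"
    using geodesic_infix[of "take i w" "[a]" "drop (Suc i) w"] reduced_wordD(1)[OF w] by simp
  then show "a \<in> X" "wlen G X a = 1"
    unfolding geodesic_def using gens_closed by auto
qed

lemma lin_fact_padded_word:
  assumes w: "w \<in> reduced_words"
  shows "lin_fact G X g ([\<one>] @ w @ [\<one>])"
proof -
  have letters: "a \<in> Mon G X" "wlen G X a = 1" if "a \<in> set w" for a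
    using reduced_word_letter[OF w that] Mon_wprod[of "[a]"] gens_closed by auto
  then have "a \<noteq> \<one>" if "a \<in> set w" for a
    using that by force
  then have "([\<one>] @ w @ [\<one>]) ! i \<noteq> \<one>" if "0 < i" "i < length w + 1" for i
    using that by (auto simp: nth_append nth_Cons')
  moreover have "(\<Sum>x\<leftarrow>w. wlen G X x) = length w"
    using letters(2) by (induction w) auto
  moreover have "wprod G ([\<one>] @ w @ [\<one>]) = g"
    using wprod_append[of w "[\<one>]"] reduced_wordD[OF w] lists_gens_carrier Mon_closed[OF g_Mon]
    by simp
  ultimately show ?thesis
    unfolding lin_fact_def using letters(1) one_Mon reduced_wordD(3)[OF w] by auto
qed

lemma wfact_in_W_cell:
  assumes w: "w \<in> reduced_words" and ts: "ts \<in> orthoscheme"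
  shows "wfact w ts \<in> W_cell G ([\<one>] @ w @ [\<one>])"
proof -
  define s where "s i = ts ! (i - 1)" for i
  have len: "length ([\<one>] @ w @ [\<one>]) = n + 2" "length ts = n"
    using reduced_wordD(3)[OF w] orthoscheme_length[OF ts] by auto
  have "[1..<n+1] = map Suc [0..<n]"
    by (simp add: map_Suc_upt)
  then have times: "map s [1..<n+1] = ts"
    unfolding s_def using map_nth[of ts] len(2) by (simp add: o_def)
  have closed: "set ([\<one>] @ w @ [\<one>]) \<subseteq> carrier G"
    using lists_gens_carrier reduced_wordD(2)[OF w] by auto
  have "char_map G ([\<one>] @ w @ [\<one>]) s = timed_prod (zip ([\<one>] @ w @ [\<one>]) (0 # ts @ [1]))"
    using char_map_eq_timed_prod[OF len(1) closed] times by simp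
  also have "\<dots> = wfact w ts"
  proof
    fix r
    have "zip ([\<one>] @ w @ [\<one>]) (0 # ts @ [1]) = [(\<one>, 0)] @ zip w ts @ [(\<one>, 1)]"
      using len reduced_wordD(3)[OF w] by simp
    moreover have zip_closed: "fst ` set (zip w ts) \<subseteq> carrier G"
      using closed by (auto dest: set_zip_leftD)
    ultimately show "timed_prod (zip ([\<one>] @ w @ [\<one>]) (0 # ts @ [1])) r = wfact w ts r"
      unfolding wfact_def
      using timed_prod_append[of "[(\<one>, 0)]" "zip w ts @ [(\<one>, 1)]"]
        timed_prod_append[of "zip w ts" "[(\<one>, 1)]"] timed_prod_closed[OF zip_closed, of r]
      by (simp add: timed_prod_single)
  qed
  finally have "wfact w ts = char_map G ([\<one>] @ w @ [\<one>]) s" ..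
  moreover have "0 < n \<longrightarrow> 0 \<le> s 1 \<and> s n \<le> 1" "\<forall>i. 1 \<le> i \<and> i < n \<longrightarrow> s i \<le> s (Suc i)"
    unfolding s_def using orthoscheme_range[OF ts] sorted_nth_mono[OF orthoscheme_sorted[OF ts]] len(2)
    by auto
  ultimately show ?thesis
    unfolding W_cell_def using len(1) by auto
qed

lemma lin_fact_refinement:
  assumes lf: "lin_fact G X g xs"
  obtains v where "\<And>i. i < length xs \<Longrightarrow> geodesic (v i) \<and> wprod G (v i) = xs ! i"
    and "concat (map v [0..<length xs]) \<in> reduced_words"
proof -
  have "\<forall>i\<in>{..<length xs}. \<exists>ws. geodesic ws \<and> wprod G ws = xs ! i \<and> length ws = wlen G X (xs ! i)"
  proof
    fix i assume "i \<in> {..<length xs}"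
    then have "xs ! i \<in> Mon G X"
      using lf nth_mem unfolding lin_fact_def by auto
    then show "\<exists>ws. geodesic ws \<and> wprod G ws = xs ! i \<and> length ws = wlen G X (xs ! i)"
      using geodesic_witness by blast
  qed
  then obtain v where "\<forall>i\<in>{..<length xs}. geodesic (v i) \<and> wprod G (v i) = xs ! i \<and> length (v i) = wlen G X (xs ! i)"
    by (auto dest!: bchoice)
  then have v: "\<And>i. i < length xs \<Longrightarrow> geodesic (v i) \<and> wprod G (v i) = xs ! i \<and> length (v i) = wlen G X (xs ! i)"
    by simp
  define w where "w = concat (map v [0..<length xs])"
  have letters: "w \<in> lists X"
    unfolding w_def using v unfolding geodesic_def by fastforce
  have "map (\<lambda>i. length (v i)) [0..<length xs] = map (wlen G X) xs"
    using v by (intro nth_equalityI) auto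
  then have len: "length w = n"
    using lf unfolding w_def lin_fact_def by (simp add: length_concat o_def)
  have "wprod G w = wprod G (map (\<lambda>i. wprod G (v i)) [0..<length xs])"
    unfolding w_def using wprod_concat[of "map v [0..<length xs]"] v lists_gens_carrier
    unfolding geodesic_def by (force simp: o_def)
  also have "map (\<lambda>i. wprod G (v i)) [0..<length xs] = xs"
    using v by (intro nth_equalityI) auto
  finally have "wprod G w = g"
    using lf unfolding lin_fact_def by simp
  then have "w \<in> reduced_words"
    unfolding reduced_words_def geodesic_def using letters len by simp
  then show thesis
    using that v unfolding w_def by blast
qed

lemma timed_prod_in_wfact_image:
  assumes v: "\<And>i. i < length xs \<Longrightarrow> geodesic (v i) \<and> wprod G (v i) = xs ! i"
    and w: "concat (map v [0..<length xs]) \<in> reduced_words"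
    and S: "sorted S" "set S \<subseteq> {0..1}" "length S = length xs"
  shows "timed_prod (zip xs S) \<in> wfact (concat (map v [0..<length xs])) ` orthoscheme"
proof -
  define I where "I = [0..<length xs]"
  define ts where "ts = concat (map (\<lambda>i. replicate (length (v i)) (S ! i)) I)"
  have "length ts = length (concat (map v I))"
    unfolding ts_def by (simp add: length_concat o_def)
  moreover have "sorted ts"
    unfolding ts_def using S(1,3) map_nth[of S] by (intro sorted_concat_replicate) (simp add: I_def)
  moreover have "set ts \<subseteq> set S"
    unfolding ts_def I_def using S(3) by auto
  ultimately have ts: "ts \<in> orthoscheme"
    using reduced_wordD(3)[OF w] S(2) unfolding orthoscheme_def I_def by auto
  have "set (v i) \<subseteq> carrier G" if "i \<in> set I" for i
    using v that lists_gens_carrier unfolding I_def geodesic_def by auto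
  then have "wfact (concat (map v I)) ts = timed_prod (map (\<lambda>i. (wprod G (v i), S ! i)) I)"
    unfolding wfact_def ts_def by (rule timed_prod_refine)
  also have "map (\<lambda>i. (wprod G (v i), S ! i)) I = map (\<lambda>i. (xs ! i, S ! i)) I"
    unfolding I_def using v by (intro map_cong) auto
  also have "\<dots> = zip xs S"
    unfolding I_def by (rule map_nth_pairs_eq_zip[OF S(3)])
  finally show ?thesis
    using ts unfolding I_def by (metis image_eqI)
qed

lemma W_cell_subset_wfact_image:
  assumes lf: "lin_fact G X g xs"
  shows "\<exists>w\<in>reduced_words. W_cell G xs \<subseteq> wfact w ` orthoscheme"
proof -
  obtain v where v: "\<And>i. i < length xs \<Longrightarrow> geodesic (v i) \<and> wprod G (v i) = xs ! i"
    and w: "concat (map v [0..<length xs]) \<in> reduced_words"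
    using lin_fact_refinement[OF lf] by blast
  define k where "k = length xs - 2"
  have "2 \<le> length xs"
    using lf unfolding lin_fact_def by simp
  then have len: "length xs = k + 2"
    unfolding k_def by simp
  have closed: "set xs \<subseteq> carrier G"
    using lf Mon_closed unfolding lin_fact_def by auto
  have "u \<in> wfact (concat (map v [0..<length xs])) ` orthoscheme" if u_cell: "u \<in> W_cell G xs" for u
  proof -
    obtain s where u: "u = char_map G xs s" and ends: "0 < k \<longrightarrow> 0 \<le> s 1 \<and> s k \<le> 1"
      and steps: "\<forall>i. 1 \<le> i \<and> i < k \<longrightarrow> s i \<le> s (Suc i)"
      using u_cell len unfolding W_cell_def by (auto simp: Let_def)
    have "sorted (0 # map s [1..<k+1] @ [1])" "set (0 # map s [1..<k+1] @ [1]) \<subseteq> {0..1}"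
      using sorted_padded_times[OF ends steps] by auto
    moreover have "length (0 # map s [1..<k+1] @ [1]) = length xs"
      using len by simp
    ultimately show ?thesis
      using timed_prod_in_wfact_image[OF v w] char_map_eq_timed_prod[OF len closed] u by simp
  qed
  then show ?thesis
    using w by blast
qed

lemma WFact_in_W_cell:
  assumes u: "u \<in> WFact G X g"
  shows "u \<in> W_cell G (Pfact G u)"
proof -
  have outside: "\<And>r. r < 0 \<or> 1 < r \<Longrightarrow> u r = \<one>" and fin: "finite (wsupp G u)"
    and lf: "lin_fact G X g (Pfact G u)"
    using u unfolding WFact_def by auto
  define Sp where "Sp = sorted_list_of_set (wsupp G u)"
  define R where "R = 0 # Sp @ [1]"
  have Sp: "set Sp = wsupp G u" "sorted Sp" "distinct Sp"
    unfolding Sp_def using fin by auto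
  then have Sp_range: "0 < t \<and> t < 1" if "t \<in> set Sp" for t
    using that unfolding wsupp_def by auto
  then have R: "distinct R"
    unfolding R_def using Sp(3) by force
  have Pf: "Pfact G u = map u R"
    unfolding Pfact_def R_def Sp_def by simp
  have closed: "set (map u R) \<subseteq> carrier G"
    using lf Mon_closed unfolding Pf lin_fact_def by auto
  have trivial: "u r = \<one>" if "\<not> (r \<in> set R \<and> 0 \<le> r \<and> r \<le> 1)" for r
    using that outside Sp(1) unfolding R_def wsupp_def by force
  define s where "s i = Sp ! (i - 1)" for i
  have "[1..<length Sp + 1] = map Suc [0..<length Sp]"
    by (simp add: map_Suc_upt)
  then have times: "map s [1..<length Sp + 1] = Sp"
    unfolding s_def using map_nth[of Sp] by (simp add: o_def)
  have len: "length (map u R) = length Sp + 2"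
    unfolding R_def by simp
  have "char_map G (map u R) s = timed_prod (zip (map u R) R)"
    using char_map_eq_timed_prod[OF len closed] times unfolding R_def by simp
  also have "\<dots> = u"
    using timed_prod_graph[OF R] closed trivial by auto
  finally have "u = char_map G (map u R) s" ..
  moreover have "0 < length Sp \<longrightarrow> 0 \<le> s 1 \<and> s (length Sp) \<le> 1"
    unfolding s_def using Sp_range by (auto simp: less_imp_le)
  moreover have "\<forall>i. 1 \<le> i \<and> i < length Sp \<longrightarrow> s i \<le> s (Suc i)"
    unfolding s_def using sorted_nth_mono[OF Sp(2)] by auto
  ultimately show ?thesis
    unfolding W_cell_def Pf using len by auto
qed

lemma wsupp_wfact:
  "w \<in> reduced_words \<Longrightarrow> ts \<in> orthoscheme \<Longrightarrow> wsupp G (wfact w ts) = {r \<in> set ts. 0 < r \<and> r < 1}"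
  unfolding wsupp_def using wfact_eq_one_iff by auto

lemma wprod_wfact_times:
  assumes w: "w \<in> reduced_words" and ts: "ts \<in> orthoscheme"
    and R: "sorted R" "distinct R" "set R \<subseteq> {0..1}" "set ts \<subseteq> set R"
  shows "wprod G (map (wfact w ts) R) = g"
proof -
  define L where "L = zip w ts"
  have L: "map fst L = w" "map snd L = ts"
    unfolding L_def using reduced_wordD(3)[OF w] orthoscheme_length[OF ts] by auto
  have blocks: "map (wfact w ts) R = map (wprod G) (map (\<lambda>r. map fst (filter (\<lambda>p. snd p = r) L)) R)"
    unfolding wfact_def timed_prod_def L_def using R(3) by auto
  have "fst ` set L \<subseteq> carrier G"
    using lists_gens_carrier[OF reduced_wordD(2)[OF w]] L(1) by (metis set_map)
  then have "wprod G (concat (map (\<lambda>r. map fst (filter (\<lambda>p. snd p = r) L)) R))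
      = wprod G (map (wprod G) (map (\<lambda>r. map fst (filter (\<lambda>p. snd p = r) L)) R))"
    by (intro wprod_concat) (auto simp: image_subset_iff)
  then have "wprod G (map (wfact w ts) R)
      = wprod G (concat (map (\<lambda>r. map fst (filter (\<lambda>p. snd p = r) L)) R))"
    unfolding blocks by (rule sym)
  also have "concat (map (\<lambda>r. map fst (filter (\<lambda>p. snd p = r) L)) R)
      = map fst (concat (map (\<lambda>r. filter (\<lambda>p. snd p = r) L) R))"
    by (simp add: map_concat o_def)
  also have "concat (map (\<lambda>r. filter (\<lambda>p. snd p = r) L) R) = L"
    by (rule concat_filter_keys[OF R(1,2)]) (use L R(4) orthoscheme_sorted[OF ts] in simp_all)
  finally show ?thesis
    using L(1) reduced_wordD(4)[OF w] by simp
qed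

lemma wfact_in_WFact:
  assumes w: "w \<in> reduced_words" and ts: "ts \<in> orthoscheme"
  shows "wfact w ts \<in> WFact G X g"
proof -
  define u where "u = wfact w ts"
  define Sp where "Sp = sorted_list_of_set (wsupp G u)"
  define R where "R = 0 # Sp @ [1]"
  have supp: "wsupp G u = {r \<in> set ts. 0 < r \<and> r < 1}"
    unfolding u_def using wsupp_wfact[OF w ts] .
  then have fin: "finite (wsupp G u)"
    by simp
  then have Sp: "set Sp = {r \<in> set ts. 0 < r \<and> r < 1}" "sorted Sp" "distinct Sp"
    unfolding Sp_def supp by auto
  have R: "sorted R" "distinct R" "set R \<subseteq> {0..1}" "set ts \<subseteq> set R"
    unfolding R_def using Sp orthoscheme_range[OF ts] by (force simp: sorted_append)+
  have Pf: "Pfact G u = map u R"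
    unfolding Pfact_def R_def Sp_def by simp
  have "Pfact G u ! i \<noteq> \<one>" if "0 < i" "i < length (Pfact G u) - 1" for i
  proof -
    have "Pfact G u ! i = u (Sp ! (i - 1))" "Sp ! (i - 1) \<in> set Sp"
      using that unfolding Pf R_def by (auto simp: nth_append nth_Cons')
    then show ?thesis
      using Sp(1) supp unfolding wsupp_def by auto
  qed
  moreover have "(\<Sum>x\<leftarrow>Pfact G u. wlen G X x) = n"
    using sum_list_count_list[OF R(2,4)] wfact_wlen[OF w ts] orthoscheme_length[OF ts]
    unfolding Pf unfolding u_def by (simp add: o_def)
  moreover have "wprod G (Pfact G u) = g"
    unfolding Pf unfolding u_def using wprod_wfact_times[OF w ts R] .
  moreover have "set (Pfact G u) \<subseteq> Mon G X"
    unfolding Pf unfolding u_def using wfact_Mon[OF w ts] by auto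
  ultimately have "lin_fact G X g (Pfact G u)"
    unfolding lin_fact_def Pf R_def by simp
  then show ?thesis
    unfolding WFact_def u_def[symmetric] using fin wfact_outside u_def by auto
qed

lemma WFact_eq: "WFact G X g = {wfact w ts | w ts. w \<in> reduced_words \<and> ts \<in> orthoscheme}"
proof (intro equalityI subsetI)
  fix u assume u: "u \<in> WFact G X g"
  then have "lin_fact G X g (Pfact G u)"
    unfolding WFact_def by simp
  then show "u \<in> {wfact w ts | w ts. w \<in> reduced_words \<and> ts \<in> orthoscheme}"
    using W_cell_subset_wfact_image WFact_in_W_cell[OF u] by blast
qed (use wfact_in_WFact in blast)

section \<open>The isometry\<close>

lemma bary_eq_iff_wfact_eq:
  assumes "w \<in> reduced_words" "w' \<in> reduced_words" "ts \<in> orthoscheme" "ts' \<in> orthoscheme"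
  shows "bary w ts = bary w' ts' \<longleftrightarrow> wfact w ts = wfact w' ts'"
  using bary_eq_iff[OF assms] wfact_eq_iff[OF assms] by simp

definition to_wfact :: "('a \<Rightarrow> real) \<Rightarrow> real \<Rightarrow> 'a" where
  "to_wfact lam = (SOME u. \<exists>w\<in>reduced_words. \<exists>ts\<in>orthoscheme. lam = bary w ts \<and> u = wfact w ts)"

lemma to_wfact_bary:
  assumes w: "w \<in> reduced_words" and ts: "ts \<in> orthoscheme"
  shows "to_wfact (bary w ts) = wfact w ts"
proof -
  have "\<exists>u. \<exists>w'\<in>reduced_words. \<exists>ts'\<in>orthoscheme. bary w ts = bary w' ts' \<and> u = wfact w' ts'"
    using w ts by blast
  from someI_ex[OF this] obtain w' ts' where w': "w' \<in> reduced_words" "ts' \<in> orthoscheme"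
    and eq: "bary w ts = bary w' ts'" "to_wfact (bary w ts) = wfact w' ts'"
    unfolding to_wfact_def by blast
  then show ?thesis
    using bary_eq_iff_wfact_eq[OF w w'(1) ts w'(2)] by simp
qed

lemma bij_betw_to_wfact: "bij_betw to_wfact (O_points G X g) (WFact G X g)"
proof (rule bij_betwI')
  fix p q assume "p \<in> O_points G X g" "q \<in> O_points G X g"
  then show "to_wfact p = to_wfact q \<longleftrightarrow> p = q"
    unfolding O_points_eq using to_wfact_bary bary_eq_iff_wfact_eq by auto
next
  fix p assume "p \<in> O_points G X g"
  then show "to_wfact p \<in> WFact G X g"
    unfolding O_points_eq WFact_eq using to_wfact_bary by auto
next
  fix u assume "u \<in> WFact G X g"
  then obtain w ts where "w \<in> reduced_words" "ts \<in> orthoscheme" "u = wfact w ts"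
    unfolding WFact_eq by blast
  then show "\<exists>p\<in>O_points G X g. u = to_wfact p"
    unfolding O_points_eq by (intro bexI[of _ "bary w ts"]) (auto simp: to_wfact_bary)
qed

lemma W_cell_preimage:
  assumes "lin_fact G X g xs"
  obtains w where "w \<in> reduced_words"
    and "\<And>p. p \<in> O_points G X g \<Longrightarrow> to_wfact p \<in> W_cell G xs \<Longrightarrow>
      \<exists>ts\<in>orthoscheme. p = bary w ts \<and> to_wfact p = wfact w ts"
proof -
  obtain w where w: "w \<in> reduced_words" and sub: "W_cell G xs \<subseteq> wfact w ` orthoscheme"
    using W_cell_subset_wfact_image assms by blast
  have "\<exists>ts\<in>orthoscheme. p = bary w ts \<and> to_wfact p = wfact w ts"
    if p: "p \<in> O_points G X g" "to_wfact p \<in> W_cell G xs" for p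
  proof -
    obtain w0 ts0 where "w0 \<in> reduced_words" "ts0 \<in> orthoscheme" "p = bary w0 ts0"
      using p(1) unfolding O_points_eq by blast
    moreover obtain ts where "ts \<in> orthoscheme" "to_wfact p = wfact w ts"
      using p(2) sub by blast
    ultimately show ?thesis
      using to_wfact_bary bary_eq_iff_wfact_eq w by metis
  qed
  with w show thesis
    using that by blast
qed

theorem order_complex_isometric_WFact:
  "isometric_spaces (O_points G X g) (O_dist G X g) (WFact G X g) (W_dist G X g)"
  unfolding O_dist_def W_dist_def
proof (rule isometric_spaces_intrinsic[OF bij_betw_to_wfact])
  fix xs assume "xs \<in> {xs. lin_fact G X g xs}"
  then show "W_cell G xs \<subseteq> WFact G X g"
    using W_cell_subset_wfact_image wfact_in_WFact by blast
next
  fix C p q assume "C \<in> max_chains G X g" "p \<in> osimplex C" "q \<in> osimplex C"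
  then obtain w ts ts' where "w \<in> reduced_words" "C = word_chain w"
    and "ts \<in> orthoscheme" "ts' \<in> orthoscheme" "p = bary w ts" "q = bary w ts'"
    unfolding max_chains_eq using osimplex_word_chain by blast
  then show "\<exists>xs\<in>{xs. lin_fact G X g xs}. to_wfact p \<in> W_cell G xs \<and> to_wfact q \<in> W_cell G xs
      \<and> W_cell_dist G X g xs (to_wfact p) (to_wfact q) = O_cell_dist G X g C p q"
    using lin_fact_padded_word wfact_in_W_cell to_wfact_bary W_cell_dist_wfact O_cell_dist_bary
    by auto
next
  fix xs p q assume "xs \<in> {xs. lin_fact G X g xs}" and pq: "p \<in> O_points G X g" "q \<in> O_points G X g"
    and cell: "to_wfact p \<in> W_cell G xs" "to_wfact q \<in> W_cell G xs"
  then obtain w where w: "w \<in> reduced_words" and preimage: "\<And>p. p \<in> O_points G X g \<Longrightarrow>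
      to_wfact p \<in> W_cell G xs \<Longrightarrow> \<exists>ts\<in>orthoscheme. p = bary w ts \<and> to_wfact p = wfact w ts"
    using W_cell_preimage by auto
  obtain ts ts' where "ts \<in> orthoscheme" "ts' \<in> orthoscheme"
    and "p = bary w ts" "to_wfact p = wfact w ts" "q = bary w ts'" "to_wfact q = wfact w ts'"
    using preimage[OF pq(1) cell(1)] preimage[OF pq(2) cell(2)] by blast
  then show "\<exists>C\<in>max_chains G X g. p \<in> osimplex C \<and> q \<in> osimplex C
      \<and> O_cell_dist G X g C p q = W_cell_dist G X g xs (to_wfact p) (to_wfact q)"
    using word_chain_in_max_chains[OF w] osimplex_word_chain[OF w]
      O_cell_dist_bary[OF w] W_cell_dist_wfact[OF w w] by auto
qed

end

theorem proposition4p6: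
  fixes G (structure) and X :: "'a set" and g :: 'a
  assumes "group G"
    and "X \<subseteq> carrier G"
    and "generate G X = carrier G"
    and "\<forall>x \<in> X. \<forall>h \<in> carrier G. h \<otimes> x \<otimes> inv h \<in> X"
    and "g \<in> Mon G X"
  shows "isometric_spaces (O_points G X g) (O_dist G X g) (WFact G X g) (W_dist G X g)"
proof -
  interpret factor_interval G X g
    using assms(1,2,5) by (simp add: factor_interval_def factor_interval_axioms_def
      generated_monoid_def generated_monoid_axioms_def)
  show ?thesis
    by (rule order_complex_isometric_WFact)
qed

end
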